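(* Let $F:\mathcal C\to\mathcal D$ be a pseudofunctor of bicategories. Then every extended formal diagram for $F$ commutes. Equivalently, for every map of graphs $H:G\to M$, every hom-category of the bicategory $\mathcal M(H)$ is thin.
   Context: Let $\mathbf{Pseudo}_1$ be the category of pseudofunctors $F:\mathcal C\to\mathcal D$ of bicategories with morphisms pairs of strict functors forming strictly commuting squares. The functor from $\mathbf{Pseudo}_1$ to the arrow category of directed graphs sending $F$ to the graph map $UF:U\mathcal C\to U\mathcal D$ (where $U$ takes 0-cells and 1-cells) has a left adjoint, sending a graph map $H:G\to M$ to a pseudofunctor $\Phi_H:\mathcal F(G)\to\mathcal M(H)$, where $\mathcal F(G)$ is the free bicategory on $G$. Its universal property: for every pseudofunctor $F:\mathcal C\to\mathcal D$ and every strictly commuting square of graph maps $g:G\to U\mathcal C$, $h:M\to U\mathcal D$ with $UF\circ g=h\circ H$, there are unique strict functors $\mathcal F(G)\to\mathcal C$ and $\mathcal M(H)\to\mathcal D$ extending $g$ and $h$ such that the resulting square with $\Phi_H$ and $F$ commutes strictly. (Concretely, 1-cells of $\mathcal M(H)$ are parenthesized composable words in formal units, edges of $M$, and terms $\Phi_H(w)$ with $w$ a 1-cell of $\mathcal F(G)$, where a term $\Phi_H(X)$ for a single edge $X$ of $G$ is identified with the edge $H(X)$ of $M$.) An extended formal diagram for $F$ is a diagram in $\mathcal D$ which is the image of a diagram in $\mathcal M(H)$ under the strict functor $\mathcal M(H)\to\mathcal D$ arising from some such square. *)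

theory Defs
  imports Main
begin

record ('v,'e) graph =
  verts :: "'v set"
  arcs  :: "'e set"
  gsrc  :: "'e \<Rightarrow> 'v"
  gtgt  :: "'e \<Rightarrow> 'v"

definition wf_graph :: "('v,'e) graph \<Rightarrow> bool" where
  "wf_graph G \<longleftrightarrow> (\<forall>e\<in>arcs G. gsrc G e \<in> verts G \<and> gtgt G e \<in> verts G)"

definition graph_hom :: "('a,'b) graph \<Rightarrow> ('c,'d) graph \<Rightarrow> ('a \<Rightarrow> 'c) \<Rightarrow> ('b \<Rightarrow> 'd) \<Rightarrow> bool" where
  "graph_hom G M hv he \<longleftrightarrow>
     (\<forall>v\<in>verts G. hv v \<in> verts M) \<and>
     (\<forall>e\<in>arcs G. he e \<in> arcs M \<and> gsrc M (he e) = hv (gsrc G e) \<and> gtgt M (he e) = hv (gtgt G e))"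

section \<open>Bicategories presented by generating 1-cells, 2-cells and relations\<close>

text \<open>1-cells: parenthesized words of formal units and generating 1-cells.
  \<open>C g f\<close> is the horizontal composite "g after f" (source of f, target of g).\<close>
datatype ('v,'g) w1 = U 'v | G 'g | C "('v,'g) w1" "('v,'g) w1"

text \<open>2-cell terms: identities, vertical composite \<open>V \<beta> \<alpha>\<close> (\<open>\<alpha>\<close> first),
  horizontal composite \<open>H \<beta> \<alpha>\<close>, associators \<open>A h g f : (h g) f \<Rightarrow> h (g f)\<close>,
  left unitors \<open>L f : 1 f \<Rightarrow> f\<close>, right unitors \<open>R f : f 1 \<Rightarrow> f\<close>, their formal
  inverses, and generating 2-cells \<open>X x\<close>.\<close>
datatype ('v,'g,'x) c2 =
    Id "('v,'g) w1"
  | V "('v,'g,'x) c2" "('v,'g,'x) c2"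
  | H "('v,'g,'x) c2" "('v,'g,'x) c2"
  | A "('v,'g) w1" "('v,'g) w1" "('v,'g) w1"
  | Ai "('v,'g) w1" "('v,'g) w1" "('v,'g) w1"
  | L "('v,'g) w1" | Li "('v,'g) w1"
  | R "('v,'g) w1" | Ri "('v,'g) w1"
  | X 'x

record ('v,'g,'x) sig =
  sv  :: "'v set"
  sg  :: "'g set"
  sgs :: "'g \<Rightarrow> 'v"
  sgt :: "'g \<Rightarrow> 'v"
  sx  :: "'x set"
  sxd :: "'x \<Rightarrow> ('v,'g) w1"
  sxc :: "'x \<Rightarrow> ('v,'g) w1"

fun src1 :: "('v,'g,'x) sig \<Rightarrow> ('v,'g) w1 \<Rightarrow> 'v" where
  "src1 S (U v) = v"
| "src1 S (G g) = sgs S g"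
| "src1 S (C g f) = src1 S f"

fun tgt1 :: "('v,'g,'x) sig \<Rightarrow> ('v,'g) w1 \<Rightarrow> 'v" where
  "tgt1 S (U v) = v"
| "tgt1 S (G g) = sgt S g"
| "tgt1 S (C g f) = tgt1 S g"

fun ok1 :: "('v,'g,'x) sig \<Rightarrow> ('v,'g) w1 \<Rightarrow> bool" where
  "ok1 S (U v) = (v \<in> sv S)"
| "ok1 S (G g) = (g \<in> sg S)"
| "ok1 S (C g f) = (ok1 S g \<and> ok1 S f \<and> src1 S g = tgt1 S f)"

fun dom2 :: "('v,'g,'x) sig \<Rightarrow> ('v,'g,'x) c2 \<Rightarrow> ('v,'g) w1" where
  "dom2 S (Id f) = f"
| "dom2 S (V \<beta> \<alpha>) = dom2 S \<alpha>"
| "dom2 S (H \<beta> \<alpha>) = C (dom2 S \<beta>) (dom2 S \<alpha>)"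
| "dom2 S (A h g f) = C (C h g) f"
| "dom2 S (Ai h g f) = C h (C g f)"
| "dom2 S (L f) = C (U (tgt1 S f)) f"
| "dom2 S (Li f) = f"
| "dom2 S (R f) = C f (U (src1 S f))"
| "dom2 S (Ri f) = f"
| "dom2 S (X x) = sxd S x"

fun cod2 :: "('v,'g,'x) sig \<Rightarrow> ('v,'g,'x) c2 \<Rightarrow> ('v,'g) w1" where
  "cod2 S (Id f) = f"
| "cod2 S (V \<beta> \<alpha>) = cod2 S \<beta>"
| "cod2 S (H \<beta> \<alpha>) = C (cod2 S \<beta>) (cod2 S \<alpha>)"
| "cod2 S (A h g f) = C h (C g f)"
| "cod2 S (Ai h g f) = C (C h g) f"
| "cod2 S (L f) = f"
| "cod2 S (Li f) = C (U (tgt1 S f)) f"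
| "cod2 S (R f) = f"
| "cod2 S (Ri f) = C f (U (src1 S f))"
| "cod2 S (X x) = sxc S x"

fun ok2 :: "('v,'g,'x) sig \<Rightarrow> ('v,'g,'x) c2 \<Rightarrow> bool" where
  "ok2 S (Id f) = ok1 S f"
| "ok2 S (V \<beta> \<alpha>) = (ok2 S \<beta> \<and> ok2 S \<alpha> \<and> cod2 S \<alpha> = dom2 S \<beta>)"
| "ok2 S (H \<beta> \<alpha>) = (ok2 S \<beta> \<and> ok2 S \<alpha> \<and> src1 S (dom2 S \<beta>) = tgt1 S (dom2 S \<alpha>))"
| "ok2 S (A h g f) = (ok1 S h \<and> ok1 S g \<and> ok1 S f \<and> src1 S h = tgt1 S g \<and> src1 S g = tgt1 S f)"
| "ok2 S (Ai h g f) = (ok1 S h \<and> ok1 S g \<and> ok1 S f \<and> src1 S h = tgt1 S g \<and> src1 S g = tgt1 S f)"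
| "ok2 S (L f) = ok1 S f"
| "ok2 S (Li f) = ok1 S f"
| "ok2 S (R f) = ok1 S f"
| "ok2 S (Ri f) = ok1 S f"
| "ok2 S (X x) = (x \<in> sx S)"

text \<open>Only instances between well-formed parallel 2-cells are
  used (see \<open>beq\<close>).\<close>
inductive bax :: "('v,'g,'x) sig \<Rightarrow> ('v,'g,'x) c2 \<Rightarrow> ('v,'g,'x) c2 \<Rightarrow> bool" for S where
  idl: "bax S (V (Id (cod2 S \<alpha>)) \<alpha>) \<alpha>"
| idr: "bax S (V \<alpha> (Id (dom2 S \<alpha>))) \<alpha>"
| vassoc: "bax S (V (V \<gamma> \<beta>) \<alpha>) (V \<gamma> (V \<beta> \<alpha>))"
| hid: "bax S (H (Id g) (Id f)) (Id (C g f))"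
| interchange: "bax S (H (V \<beta>' \<beta>) (V \<alpha>' \<alpha>)) (V (H \<beta>' \<alpha>') (H \<beta> \<alpha>))"
| ainv1: "bax S (V (Ai h g f) (A h g f)) (Id (C (C h g) f))"
| ainv2: "bax S (V (A h g f) (Ai h g f)) (Id (C h (C g f)))"
| linv1: "bax S (V (Li f) (L f)) (Id (C (U (tgt1 S f)) f))"
| linv2: "bax S (V (L f) (Li f)) (Id f)"
| rinv1: "bax S (V (Ri f) (R f)) (Id (C f (U (src1 S f))))"
| rinv2: "bax S (V (R f) (Ri f)) (Id f)"
| anat: "bax S (V (A (cod2 S \<gamma>) (cod2 S \<beta>) (cod2 S \<alpha>)) (H (H \<gamma> \<beta>) \<alpha>))
               (V (H \<gamma> (H \<beta> \<alpha>)) (A (dom2 S \<gamma>) (dom2 S \<beta>) (dom2 S \<alpha>)))"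
| lnat: "bax S (V (L (cod2 S \<alpha>)) (H (Id (U (tgt1 S (cod2 S \<alpha>)))) \<alpha>)) (V \<alpha> (L (dom2 S \<alpha>)))"
| rnat: "bax S (V (R (cod2 S \<alpha>)) (H \<alpha> (Id (U (src1 S (cod2 S \<alpha>)))))) (V \<alpha> (R (dom2 S \<alpha>)))"
| pentagon: "bax S (V (A k h (C g f)) (A (C k h) g f))
                   (V (H (Id k) (A h g f)) (V (A k (C h g) f) (H (A k h g) (Id f))))"
| triangle: "bax S (V (H (Id g) (L f)) (A g (U (tgt1 S f)) f)) (H (R g) (Id f))"

inductive beq :: "('v,'g,'x) sig \<Rightarrow> (('v,'g,'x) c2 \<Rightarrow> ('v,'g,'x) c2 \<Rightarrow> bool)
                  \<Rightarrow> ('v,'g,'x) c2 \<Rightarrow> ('v,'g,'x) c2 \<Rightarrow> bool" for S Rel where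
  gen: "\<lbrakk>bax S \<alpha> \<beta> \<or> Rel \<alpha> \<beta>; ok2 S \<alpha>; ok2 S \<beta>; dom2 S \<alpha> = dom2 S \<beta>; cod2 S \<alpha> = cod2 S \<beta>\<rbrakk>
        \<Longrightarrow> beq S Rel \<alpha> \<beta>"
| refl: "ok2 S \<alpha> \<Longrightarrow> beq S Rel \<alpha> \<alpha>"
| sym: "beq S Rel \<alpha> \<beta> \<Longrightarrow> beq S Rel \<beta> \<alpha>"
| trans: "beq S Rel \<alpha> \<beta> \<Longrightarrow> beq S Rel \<beta> \<gamma> \<Longrightarrow> beq S Rel \<alpha> \<gamma>"
| congV: "beq S Rel \<beta> \<beta>' \<Longrightarrow> beq S Rel \<alpha> \<alpha>' \<Longrightarrow> ok2 S (V \<beta> \<alpha>) \<Longrightarrow> beq S Rel (V \<beta> \<alpha>) (V \<beta>' \<alpha>')"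
| congH: "beq S Rel \<beta> \<beta>' \<Longrightarrow> beq S Rel \<alpha> \<alpha>' \<Longrightarrow> ok2 S (H \<beta> \<alpha>) \<Longrightarrow> beq S Rel (H \<beta> \<alpha>) (H \<beta>' \<alpha>')"

definition hom_thin :: "('v,'g,'x) sig \<Rightarrow> (('v,'g,'x) c2 \<Rightarrow> ('v,'g,'x) c2 \<Rightarrow> bool) \<Rightarrow> bool" where
  "hom_thin S Rel \<longleftrightarrow>
     (\<forall>\<alpha> \<beta>. ok2 S \<alpha> \<and> ok2 S \<beta> \<and> dom2 S \<alpha> = dom2 S \<beta> \<and> cod2 S \<alpha> = cod2 S \<beta>
        \<longrightarrow> beq S Rel \<alpha> \<beta>)"

section \<open>The free bicategory F(G)\<close>

definition FS :: "('a,'b) graph \<Rightarrow> ('a,'b,unit) sig" where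
  "FS Gr = \<lparr>sv = verts Gr, sg = arcs Gr, sgs = gsrc Gr, sgt = gtgt Gr,
            sx = {}, sxd = (\<lambda>_. undefined), sxc = (\<lambda>_. undefined)\<rparr>"

abbreviation feq :: "('a,'b) graph \<Rightarrow> ('a,'b,unit) c2 \<Rightarrow> ('a,'b,unit) c2 \<Rightarrow> bool" where
  "feq Gr \<equiv> beq (FS Gr) (\<lambda>_ _. False)"

section \<open>The bicategory M(H) and the pseudofunctor \<open>\<Phi>_H : F(G) \<rightarrow> M(H)\<close>\<close>

text \<open>Generating 1-cells of M(H): edges of M (\<open>Inl\<close>) and \<open>\<Phi>(w)\<close> for 1-cells w of F(G)
  which are not single edges (\<open>Inr w\<close>); \<open>\<Phi>(X)\<close> for an edge X of G is identified with H(X).\<close>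
type_synonym ('a,'b,'c,'d) m1 = "('c, 'd + ('a,'b) w1) w1"

fun phi1 :: "('b \<Rightarrow> 'd) \<Rightarrow> ('a,'b) w1 \<Rightarrow> ('a,'b,'c,'d) m1" where
  "phi1 he (G e) = G (Inl (he e))"
| "phi1 he (U v) = G (Inr (U v))"
| "phi1 he (C g f) = G (Inr (C g f))"

text \<open>Generating 2-cells of M(H): \<open>\<Phi>(\<alpha>)\<close> for 2-cells of F(G), the compositors
  \<open>\<Phi>_{g,f} : \<Phi> g \<circ> \<Phi> f \<Rightarrow> \<Phi>(g f)\<close>, the unitors \<open>\<Phi>_a : 1_{H a} \<Rightarrow> \<Phi>(1_a)\<close>, and inverses.\<close>
datatype ('a,'b) mx =
    PhiMap "('a,'b,unit) c2"
  | PhiC "('a,'b) w1" "('a,'b) w1" | PhiCi "('a,'b) w1" "('a,'b) w1"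
  | PhiU 'a | PhiUi 'a

fun mxd :: "('a \<Rightarrow> 'c) \<Rightarrow> ('b \<Rightarrow> 'd) \<Rightarrow> ('a,'b) graph \<Rightarrow> ('a,'b) mx \<Rightarrow> ('a,'b,'c,'d) m1" where
  "mxd hv he Gr (PhiMap \<alpha>) = phi1 he (dom2 (FS Gr) \<alpha>)"
| "mxd hv he Gr (PhiC g f) = C (phi1 he g) (phi1 he f)"
| "mxd hv he Gr (PhiCi g f) = phi1 he (C g f)"
| "mxd hv he Gr (PhiU a) = U (hv a)"
| "mxd hv he Gr (PhiUi a) = phi1 he (U a)"

fun mxc :: "('a \<Rightarrow> 'c) \<Rightarrow> ('b \<Rightarrow> 'd) \<Rightarrow> ('a,'b) graph \<Rightarrow> ('a,'b) mx \<Rightarrow> ('a,'b,'c,'d) m1" where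
  "mxc hv he Gr (PhiMap \<alpha>) = phi1 he (cod2 (FS Gr) \<alpha>)"
| "mxc hv he Gr (PhiC g f) = phi1 he (C g f)"
| "mxc hv he Gr (PhiCi g f) = C (phi1 he g) (phi1 he f)"
| "mxc hv he Gr (PhiU a) = phi1 he (U a)"
| "mxc hv he Gr (PhiUi a) = U (hv a)"

definition MS :: "('a,'b) graph \<Rightarrow> ('c,'d) graph \<Rightarrow> ('a \<Rightarrow> 'c) \<Rightarrow> ('b \<Rightarrow> 'd)
                   \<Rightarrow> ('c, 'd + ('a,'b) w1, ('a,'b) mx) sig" where
  "MS Gr Mg hv he =
     \<lparr>sv = verts Mg,
      sg = Inl ` arcs Mg \<union> Inr ` {w. ok1 (FS Gr) w \<and> (\<forall>e. w \<noteq> G e)},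
      sgs = case_sum (gsrc Mg) (\<lambda>w. hv (src1 (FS Gr) w)),
      sgt = case_sum (gtgt Mg) (\<lambda>w. hv (tgt1 (FS Gr) w)),
      sx = {PhiMap \<alpha> | \<alpha>. ok2 (FS Gr) \<alpha>}
           \<union> {PhiC g f | g f. ok1 (FS Gr) g \<and> ok1 (FS Gr) f \<and> src1 (FS Gr) g = tgt1 (FS Gr) f}
           \<union> {PhiCi g f | g f. ok1 (FS Gr) g \<and> ok1 (FS Gr) f \<and> src1 (FS Gr) g = tgt1 (FS Gr) f}
           \<union> {PhiU a | a. a \<in> verts Gr} \<union> {PhiUi a | a. a \<in> verts Gr},
      sxd = mxd hv he Gr,
      sxc = mxc hv he Gr\<rparr>"

inductive mrel :: "('a,'b) graph \<Rightarrow> ('a \<Rightarrow> 'c) \<Rightarrow> ('b \<Rightarrow> 'd)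
                   \<Rightarrow> ('c, 'd + ('a,'b) w1, ('a,'b) mx) c2 \<Rightarrow> ('c, 'd + ('a,'b) w1, ('a,'b) mx) c2 \<Rightarrow> bool"
  for Gr hv he where
  resp: "feq Gr \<alpha> \<beta> \<Longrightarrow> mrel Gr hv he (X (PhiMap \<alpha>)) (X (PhiMap \<beta>))"
| fid: "mrel Gr hv he (X (PhiMap (Id w))) (Id (phi1 he w))"
| fcomp: "mrel Gr hv he (X (PhiMap (V \<beta> \<alpha>))) (V (X (PhiMap \<beta>)) (X (PhiMap \<alpha>)))"
| cnat: "mrel Gr hv he
           (V (X (PhiC (cod2 (FS Gr) \<beta>) (cod2 (FS Gr) \<alpha>))) (H (X (PhiMap \<beta>)) (X (PhiMap \<alpha>))))
           (V (X (PhiMap (H \<beta> \<alpha>))) (X (PhiC (dom2 (FS Gr) \<beta>) (dom2 (FS Gr) \<alpha>))))"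
| cinv1: "mrel Gr hv he (V (X (PhiCi g f)) (X (PhiC g f))) (Id (C (phi1 he g) (phi1 he f)))"
| cinv2: "mrel Gr hv he (V (X (PhiC g f)) (X (PhiCi g f))) (Id (phi1 he (C g f)))"
| uinv1: "mrel Gr hv he (V (X (PhiUi a)) (X (PhiU a))) (Id (U (hv a)))"
| uinv2: "mrel Gr hv he (V (X (PhiU a)) (X (PhiUi a))) (Id (phi1 he (U a)))"
| assoc: "mrel Gr hv he
           (V (X (PhiMap (A h g f))) (V (X (PhiC (C h g) f)) (H (X (PhiC h g)) (Id (phi1 he f)))))
           (V (X (PhiC h (C g f))) (V (H (Id (phi1 he h)) (X (PhiC g f)))
                (A (phi1 he h) (phi1 he g) (phi1 he f))))"
| lunit: "mrel Gr hv he
           (V (X (PhiMap (L f))) (V (X (PhiC (U (tgt1 (FS Gr) f)) f))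
               (H (X (PhiU (tgt1 (FS Gr) f))) (Id (phi1 he f)))))
           (L (phi1 he f))"
| runit: "mrel Gr hv he
           (V (X (PhiMap (R f))) (V (X (PhiC f (U (src1 (FS Gr) f))))
               (H (Id (phi1 he f)) (X (PhiU (src1 (FS Gr) f))))))
           (R (phi1 he f))"

end

theory Submission
  imports Defs
begin

text \<open>In a presented bicategory every 1-cell \<open>w\<close> has a canonical
  invertible 2-cell \<open>canon w\<close> to its normal form, the right-bracketed word of its generators
  ending in a unit, built from associators, unitors and chosen isomorphisms for the generating
  1-cells.  If these are compatible with the generating 2-cells, then
  \<open>canon (cod a) \<circ> a = canon (dom a)\<close> for every 2-cell \<open>a\<close>, by induction on \<open>a\<close>: for the
  structural cells this is Mac Lane--Kelly coherence (pentagon, triangle and Kelly's unit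
  lemmas), for composites it is interchange.  Cancelling the isomorphism \<open>canon (cod a)\<close> shows
  that parallel 2-cells are equal.

  In \<open>M(H)\<close> the generator \<open>\<Phi>(w)\<close> is normalised by normalising \<open>w\<close> in the free bicategory
  \<open>F(G)\<close>, applying \<open>\<Phi>\<close>, and splitting \<open>\<Phi>\<close> of a right-bracketed word into edges of \<open>M\<close> with
  the inverse compositors and unitors of \<open>\<Phi>\<close>.  The pseudofunctor axioms imposed in \<open>M(H)\<close>
  are exactly what makes these canonical 2-cells compatible with the generators
  \<open>\<Phi>(\<alpha>)\<close> and with the compositors and unitors of \<open>\<Phi>\<close>.\<close>

section \<open>Presented bicategories\<close>

definition wf_sig :: "('v,'g,'x) sig \<Rightarrow> bool" where
 "wf_sig S \<longleftrightarrow> (\<forall>g\<in>sg S. sgs S g \<in> sv S \<and> sgt S g \<in> sv S) \<and>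
    (\<forall>x\<in>sx S. ok1 S (sxd S x) \<and> ok1 S (sxc S x) \<and> src1 S (sxd S x) = src1 S (sxc S x)
        \<and> tgt1 S (sxd S x) = tgt1 S (sxc S x))"

lemma ok1_endpoints: "wf_sig S \<Longrightarrow> ok1 S f \<Longrightarrow> src1 S f \<in> sv S \<and> tgt1 S f \<in> sv S"
  by (induction f) (auto simp: wf_sig_def)

lemma ok2_boundary: assumes w: "wf_sig S" shows "ok2 S a \<Longrightarrow> ok1 S (dom2 S a) \<and> ok1 S (cod2 S a)
   \<and> src1 S (dom2 S a) = src1 S (cod2 S a) \<and> tgt1 S (dom2 S a) = tgt1 S (cod2 S a)"
  using w by (induction a) (auto simp: wf_sig_def dest: ok1_endpoints[OF w])

lemma beq_parallel: "beq S Rel a b \<Longrightarrow> ok2 S a \<and> ok2 S b \<and> dom2 S a = dom2 S b \<and> cod2 S a = cod2 S b"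
  by (induction rule: beq.induct) auto

locale presentation = fixes S :: "('v,'g,'x) sig" and Rel :: "('v,'g,'x) c2 \<Rightarrow> ('v,'g,'x) c2 \<Rightarrow> bool"
  assumes wfs: "wf_sig S"
begin

abbreviation eqv (infix "\<approx>" 50) where "a \<approx> b \<equiv> beq S Rel a b"

lemma boundary: "ok2 S a \<Longrightarrow> ok1 S (dom2 S a) \<and> ok1 S (cod2 S a)
   \<and> src1 S (dom2 S a) = src1 S (cod2 S a) \<and> tgt1 S (dom2 S a) = tgt1 S (cod2 S a)"
  using ok2_boundary wfs by blast

lemma endpoints: "ok1 S f \<Longrightarrow> src1 S f \<in> sv S" "ok1 S f \<Longrightarrow> tgt1 S f \<in> sv S"
  using ok1_endpoints wfs by blast+

lemma beqD: assumes "a \<approx> b" shows "ok2 S a" "ok2 S b" "dom2 S a = dom2 S b" "cod2 S a = cod2 S b"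
  using beq_parallel[OF assms] by auto

lemma eq_refl: "ok2 S a \<Longrightarrow> a \<approx> a" by (rule beq.refl)
lemma eq_sym: "a \<approx> b \<Longrightarrow> b \<approx> a" by (rule beq.sym)
lemmas [trans] = beq.trans

lemma V_cong: "b \<approx> b' \<Longrightarrow> a \<approx> a' \<Longrightarrow> cod2 S a = dom2 S b \<Longrightarrow> V b a \<approx> V b' a'"
  by (rule beq.congV) (auto dest: beqD)
lemma H_cong: "b \<approx> b' \<Longrightarrow> a \<approx> a' \<Longrightarrow> src1 S (dom2 S b) = tgt1 S (dom2 S a) \<Longrightarrow> H b a \<approx> H b' a'"
  by (rule beq.congH) (auto dest: beqD)
lemma V_cong_left: "b \<approx> b' \<Longrightarrow> ok2 S a \<Longrightarrow> cod2 S a = dom2 S b \<Longrightarrow> V b a \<approx> V b' a"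
  by (rule V_cong) (auto intro: eq_refl)
lemma V_cong_right: "a \<approx> a' \<Longrightarrow> ok2 S b \<Longrightarrow> cod2 S a = dom2 S b \<Longrightarrow> V b a \<approx> V b a'"
  by (rule V_cong) (auto intro: eq_refl)
lemma H_cong_left: "b \<approx> b' \<Longrightarrow> ok2 S a \<Longrightarrow> src1 S (dom2 S b) = tgt1 S (dom2 S a) \<Longrightarrow> H b a \<approx> H b' a"
  by (rule H_cong) (auto intro: eq_refl)
lemma H_cong_right: "a \<approx> a' \<Longrightarrow> ok2 S b \<Longrightarrow> src1 S (dom2 S b) = tgt1 S (dom2 S a) \<Longrightarrow> H b a \<approx> H b a'"
  by (rule H_cong) (auto intro: eq_refl)

lemma axiom: "bax S a b \<Longrightarrow> ok2 S a \<Longrightarrow> ok2 S b \<Longrightarrow> dom2 S a = dom2 S b \<Longrightarrow> cod2 S a = cod2 S b \<Longrightarrow> a \<approx> b"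
  by (rule beq.gen) auto

lemma V_Id_left: "ok2 S a \<Longrightarrow> cod2 S a = f \<Longrightarrow> V (Id f) a \<approx> a"
  using boundary[of a] by (auto intro!: axiom bax.idl)
lemma V_Id_right: "ok2 S a \<Longrightarrow> dom2 S a = f \<Longrightarrow> V a (Id f) \<approx> a"
  using boundary[of a] by (auto intro!: axiom bax.idr)
lemma V_assoc: "ok2 S (V (V c b) a) \<Longrightarrow> V (V c b) a \<approx> V c (V b a)"
  by (auto intro!: axiom bax.vassoc)
lemma H_Id: "ok1 S g \<Longrightarrow> ok1 S f \<Longrightarrow> src1 S g = tgt1 S f \<Longrightarrow> H (Id g) (Id f) \<approx> Id (C g f)"
  by (auto intro!: axiom bax.hid)
lemma interchange: "ok2 S (H (V b' b) (V a' a)) \<Longrightarrow> H (V b' b) (V a' a) \<approx> V (H b' a') (H b a)"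
  using boundary[of b] boundary[of a] by (auto intro!: axiom bax.interchange)

declare endpoints[simp]

lemma A_natural: "ok2 S c \<Longrightarrow> ok2 S b \<Longrightarrow> ok2 S a \<Longrightarrow> dom2 S c = h \<Longrightarrow> dom2 S b = g \<Longrightarrow> dom2 S a = f
  \<Longrightarrow> cod2 S c = h' \<Longrightarrow> cod2 S b = g' \<Longrightarrow> cod2 S a = f' \<Longrightarrow> src1 S h = tgt1 S g \<Longrightarrow> src1 S g = tgt1 S f
  \<Longrightarrow> V (A h' g' f') (H (H c b) a) \<approx> V (H c (H b a)) (A h g f)"
  using boundary[of a] boundary[of b] boundary[of c] by (auto intro!: axiom bax.anat[where \<gamma>=c and \<beta>=b and \<alpha>=a, simplified])

lemma L_natural: "ok2 S a \<Longrightarrow> dom2 S a = f \<Longrightarrow> cod2 S a = f' \<Longrightarrow> t = tgt1 S f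
  \<Longrightarrow> V (L f') (H (Id (U t)) a) \<approx> V a (L f)"
  using boundary[of a] by (auto intro!: axiom bax.lnat[where \<alpha>=a, simplified])
lemma R_natural: "ok2 S a \<Longrightarrow> dom2 S a = f \<Longrightarrow> cod2 S a = f' \<Longrightarrow> s = src1 S f
  \<Longrightarrow> V (R f') (H a (Id (U s))) \<approx> V a (R f)"
  using boundary[of a] by (auto intro!: axiom bax.rnat[where \<alpha>=a, simplified])
lemma pentagon: "ok1 S k \<Longrightarrow> ok1 S h \<Longrightarrow> ok1 S g \<Longrightarrow> ok1 S f \<Longrightarrow> src1 S k = tgt1 S h \<Longrightarrow>
  src1 S h = tgt1 S g \<Longrightarrow> src1 S g = tgt1 S f \<Longrightarrow>
  V (A k h (C g f)) (A (C k h) g f) \<approx> V (H (Id k) (A h g f)) (V (A k (C h g) f) (H (A k h g) (Id f)))"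
  by (auto intro!: axiom bax.pentagon)
lemma triangle: "ok1 S g \<Longrightarrow> ok1 S f \<Longrightarrow> src1 S g = tgt1 S f \<Longrightarrow> t = tgt1 S f \<Longrightarrow>
  V (H (Id g) (L f)) (A g (U t) f) \<approx> H (R g) (Id f)"
  by (auto intro!: axiom bax.triangle)

definition inverses :: "('v,'g,'x) c2 \<Rightarrow> ('v,'g,'x) c2 \<Rightarrow> bool" where
 "inverses a b \<longleftrightarrow> ok2 S a \<and> ok2 S b \<and> dom2 S b = cod2 S a \<and> cod2 S b = dom2 S a \<and>
    V b a \<approx> Id (dom2 S a) \<and> V a b \<approx> Id (cod2 S a)"
definition iso :: "('v,'g,'x) c2 \<Rightarrow> bool" where "iso a \<longleftrightarrow> (\<exists>b. inverses a b)"

lemma inverses_sym: "inverses a b \<Longrightarrow> inverses b a" by (auto simp: inverses_def)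
lemma inverses_iso: "inverses a b \<Longrightarrow> iso a" "inverses a b \<Longrightarrow> iso b"
  by (auto simp: iso_def intro: inverses_sym)

lemma inverses_A: "ok1 S h \<Longrightarrow> ok1 S g \<Longrightarrow> ok1 S f \<Longrightarrow> src1 S h = tgt1 S g \<Longrightarrow> src1 S g = tgt1 S f
  \<Longrightarrow> inverses (A h g f) (Ai h g f)"
  by (auto simp: inverses_def intro!: axiom bax.ainv1 bax.ainv2)
lemma inverses_L: "ok1 S f \<Longrightarrow> inverses (L f) (Li f)"
  by (auto simp: inverses_def intro!: axiom bax.linv1 bax.linv2)
lemma inverses_R: "ok1 S f \<Longrightarrow> inverses (R f) (Ri f)"
  by (auto simp: inverses_def intro!: axiom bax.rinv1 bax.rinv2)
lemma inverses_Id: "ok1 S f \<Longrightarrow> inverses (Id f) (Id f)"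
  by (simp add: inverses_def V_Id_left)

lemma inverses_V: assumes "inverses a a'" "inverses b b'" "cod2 S a = dom2 S b"
  shows "inverses (V b a) (V a' b')"
proof -
  have o: "ok2 S a" "ok2 S a'" "ok2 S b" "ok2 S b'" and d: "dom2 S a' = cod2 S a" "cod2 S a' = dom2 S a"
      "dom2 S b' = cod2 S b" "cod2 S b' = dom2 S b"
    and e: "V a' a \<approx> Id (dom2 S a)" "V a a' \<approx> Id (cod2 S a)" "V b' b \<approx> Id (dom2 S b)" "V b b' \<approx> Id (cod2 S b)"
    using assms by (auto simp: inverses_def)
  have "V (V a' b') (V b a) \<approx> V a' (V b' (V b a))" using o d assms(3) by (intro V_assoc) auto
  also have "\<dots> \<approx> V a' (V (V b' b) a)" using o d assms(3) by (intro V_cong_right eq_sym[OF V_assoc]) auto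
  also have "\<dots> \<approx> V a' (V (Id (dom2 S b)) a)" using o d assms(3) e by (intro V_cong_right V_cong_left) auto
  also have "\<dots> \<approx> V a' a" using o d assms(3) e by (intro V_cong_right V_Id_left) auto
  also have "\<dots> \<approx> Id (dom2 S a)" by (rule e)
  finally have 1: "V (V a' b') (V b a) \<approx> Id (dom2 S (V b a))" by simp
  have "V (V b a) (V a' b') \<approx> V b (V a (V a' b'))" using o d assms(3) by (intro V_assoc) auto
  also have "\<dots> \<approx> V b (V (V a a') b')" using o d assms(3) by (intro V_cong_right eq_sym[OF V_assoc]) auto
  also have "\<dots> \<approx> V b (V (Id (cod2 S a)) b')" using o d assms(3) e by (intro V_cong_right V_cong_left) auto
  also have "\<dots> \<approx> V b b'" using o d assms(3) e by (intro V_cong_right V_Id_left) auto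
  also have "\<dots> \<approx> Id (cod2 S b)" by (rule e)
  finally have 2: "V (V b a) (V a' b') \<approx> Id (cod2 S (V b a))" by simp
  show ?thesis using 1 2 o d assms(3) by (simp add: inverses_def)
qed

lemma H_Id_V: assumes "ok2 S (V b a)" "ok1 S k" "src1 S k = tgt1 S (dom2 S a)"
  shows "H (Id k) (V b a) \<approx> V (H (Id k) b) (H (Id k) a)"
proof -
  have "H (Id k) (V b a) \<approx> H (V (Id k) (Id k)) (V b a)" using assms by (intro H_cong_left eq_sym[OF V_Id_left]) auto
  also have "\<dots> \<approx> V (H (Id k) b) (H (Id k) a)" using assms boundary[of a] boundary[of b] by (intro interchange) auto
  finally show ?thesis .
qed
lemma H_V_Id: assumes "ok2 S (V b a)" "ok1 S k" "tgt1 S k = src1 S (dom2 S a)"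
  shows "H (V b a) (Id k) \<approx> V (H b (Id k)) (H a (Id k))"
proof -
  have "H (V b a) (Id k) \<approx> H (V b a) (V (Id k) (Id k))" using assms by (intro H_cong_right eq_sym[OF V_Id_left]) auto
  also have "\<dots> \<approx> V (H b (Id k)) (H a (Id k))" using assms boundary[of a] boundary[of b] by (intro interchange) auto
  finally show ?thesis .
qed

lemma inverses_H: assumes "inverses a a'" "inverses b b'" "src1 S (dom2 S b) = tgt1 S (dom2 S a)"
  shows "inverses (H b a) (H b' a')"
proof -
  have o: "ok2 S a" "ok2 S a'" "ok2 S b" "ok2 S b'" and d: "dom2 S a' = cod2 S a" "cod2 S a' = dom2 S a"
      "dom2 S b' = cod2 S b" "cod2 S b' = dom2 S b"
    and e: "V a' a \<approx> Id (dom2 S a)" "V a a' \<approx> Id (cod2 S a)" "V b' b \<approx> Id (dom2 S b)" "V b b' \<approx> Id (cod2 S b)"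
    using assms by (auto simp: inverses_def)
  note t = boundary[of a] boundary[of b]
  have "V (H b' a') (H b a) \<approx> H (V b' b) (V a' a)" using o d t assms(3) by (intro eq_sym[OF interchange]) auto
  also have "\<dots> \<approx> H (Id (dom2 S b)) (Id (dom2 S a))" using o d t e assms(3) by (intro H_cong) auto
  also have "\<dots> \<approx> Id (C (dom2 S b) (dom2 S a))" using o d t assms(3) by (intro H_Id) auto
  finally have 1: "V (H b' a') (H b a) \<approx> Id (dom2 S (H b a))" by simp
  have "V (H b a) (H b' a') \<approx> H (V b b') (V a a')" using o d t assms(3) by (intro eq_sym[OF interchange]) auto
  also have "\<dots> \<approx> H (Id (cod2 S b)) (Id (cod2 S a))" using o d t e assms(3) by (intro H_cong) auto
  also have "\<dots> \<approx> Id (C (cod2 S b) (cod2 S a))" using o d t assms(3) by (intro H_Id) auto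
  finally have 2: "V (H b a) (H b' a') \<approx> Id (cod2 S (H b a))" by simp
  show ?thesis using 1 2 o d t assms(3) by (simp add: inverses_def)
qed

lemma iso_V: "iso a \<Longrightarrow> iso b \<Longrightarrow> cod2 S a = dom2 S b \<Longrightarrow> iso (V b a)"
  unfolding iso_def using inverses_V by blast
lemma iso_H: "iso a \<Longrightarrow> iso b \<Longrightarrow> src1 S (dom2 S b) = tgt1 S (dom2 S a) \<Longrightarrow> iso (H b a)"
  unfolding iso_def using inverses_H by blast
lemma iso_ok: "iso a \<Longrightarrow> ok2 S a" by (auto simp: iso_def inverses_def)

lemma iso_cancel_left: assumes "iso c" "V c a \<approx> V c b" "cod2 S a = dom2 S c" shows "a \<approx> b"
proof -
  obtain c' where i: "inverses c c'" using assms(1) iso_def by blast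
  have b: "ok2 S a" "ok2 S b" "cod2 S b = dom2 S c" using beqD[OF assms(2)] assms(3) by auto
  have "a \<approx> V (Id (dom2 S c)) a" using b assms(3) by (intro eq_sym[OF V_Id_left]) auto
  also have "\<dots> \<approx> V (V c' c) a" using i b assms(3) by (intro V_cong_left[OF eq_sym]) (auto simp: inverses_def)
  also have "\<dots> \<approx> V c' (V c a)" using i b assms(3) by (intro V_assoc) (auto simp: inverses_def)
  also have "\<dots> \<approx> V c' (V c b)" by (rule V_cong_right) (use i b assms in \<open>auto simp: inverses_def\<close>)
  also have "\<dots> \<approx> V (V c' c) b" using i b assms(3) by (intro eq_sym[OF V_assoc]) (auto simp: inverses_def)
  also have "\<dots> \<approx> V (Id (dom2 S c)) b" using i b assms(3) by (intro V_cong_left) (auto simp: inverses_def)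
  also have "\<dots> \<approx> b" using b by (intro V_Id_left) auto
  finally show ?thesis .
qed
lemma iso_cancel_right: assumes "iso c" "V a c \<approx> V b c" "dom2 S a = cod2 S c" shows "a \<approx> b"
proof -
  obtain c' where i: "inverses c c'" using assms(1) iso_def by blast
  have b: "ok2 S a" "ok2 S b" "dom2 S b = cod2 S c" using beqD[OF assms(2)] assms(3) by auto
  have "a \<approx> V a (Id (cod2 S c))" using b assms(3) by (intro eq_sym[OF V_Id_right]) auto
  also have "\<dots> \<approx> V a (V c c')" using i b assms(3) by (intro V_cong_right[OF eq_sym]) (auto simp: inverses_def)
  also have "\<dots> \<approx> V (V a c) c'" using i b assms(3) by (intro eq_sym[OF V_assoc]) (auto simp: inverses_def)
  also have "\<dots> \<approx> V (V b c) c'" by (rule V_cong_left) (use i b assms in \<open>auto simp: inverses_def\<close>)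
  also have "\<dots> \<approx> V b (V c c')" using i b assms(3) by (intro V_assoc) (auto simp: inverses_def)
  also have "\<dots> \<approx> V b (Id (cod2 S c))" using i b assms(3) by (intro V_cong_right) (auto simp: inverses_def)
  also have "\<dots> \<approx> b" using b by (intro V_Id_right) auto
  finally show ?thesis .
qed

lemma iso_A: "ok1 S h \<Longrightarrow> ok1 S g \<Longrightarrow> ok1 S f \<Longrightarrow> src1 S h = tgt1 S g \<Longrightarrow> src1 S g = tgt1 S f
  \<Longrightarrow> iso (A h g f)" using inverses_A inverses_iso by blast
lemma iso_L: "ok1 S f \<Longrightarrow> iso (L f)" using inverses_L inverses_iso by blast
lemma iso_R: "ok1 S f \<Longrightarrow> iso (R f)" using inverses_R inverses_iso by blast
lemma iso_Id: "ok1 S f \<Longrightarrow> iso (Id f)" using inverses_Id inverses_iso by blast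

lemma unit_whisker_cancel_left: assumes "H (Id (U t)) a \<approx> H (Id (U t)) b" "ok2 S a" "tgt1 S (dom2 S a) = t"
  shows "a \<approx> b"
proof -
  have b: "ok2 S b" "dom2 S b = dom2 S a" "cod2 S b = cod2 S a" using beqD[OF assms(1)] by auto
  have "V a (L (dom2 S a)) \<approx> V (L (cod2 S a)) (H (Id (U t)) a)"
    using assms boundary[of a] by (intro eq_sym[OF L_natural]) auto
  also have "\<dots> \<approx> V (L (cod2 S a)) (H (Id (U t)) b)"
    using assms boundary[of a] by (intro V_cong_right) auto
  also have "\<dots> \<approx> V b (L (dom2 S a))"
    using assms boundary[of a] b by (intro L_natural) auto
  finally have e: "V a (L (dom2 S a)) \<approx> V b (L (dom2 S a))" .
  show ?thesis using boundary[of a] assms(2) by (intro iso_cancel_right[OF iso_L e]) auto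
qed
lemma unit_whisker_cancel_right: assumes "H a (Id (U s)) \<approx> H b (Id (U s))" "ok2 S a" "src1 S (dom2 S a) = s"
  shows "a \<approx> b"
proof -
  have b: "ok2 S b" "dom2 S b = dom2 S a" "cod2 S b = cod2 S a" using beqD[OF assms(1)] by auto
  have "V a (R (dom2 S a)) \<approx> V (R (cod2 S a)) (H a (Id (U s)))"
    using assms boundary[of a] by (intro eq_sym[OF R_natural]) auto
  also have "\<dots> \<approx> V (R (cod2 S a)) (H b (Id (U s)))"
    using assms boundary[of a] by (intro V_cong_right) auto
  also have "\<dots> \<approx> V b (R (dom2 S a))"
    using assms boundary[of a] b by (intro R_natural) auto
  finally have e: "V a (R (dom2 S a)) \<approx> V b (R (dom2 S a))" .
  show ?thesis using boundary[of a] assms(2) by (intro iso_cancel_right[OF iso_R e]) auto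
qed

lemma inverses_unique: assumes i: "inverses k t" and j: "inverses k' t'" and e: "k \<approx> k'" shows "t \<approx> t'"
proof -
  have o: "ok2 S k" "ok2 S t" "dom2 S t = cod2 S k" "cod2 S t = dom2 S k" "V t k \<approx> Id (dom2 S k)"
    "V k t \<approx> Id (cod2 S k)" using i by (auto simp: inverses_def)
  have p: "ok2 S k'" "ok2 S t'" "dom2 S t' = cod2 S k'" "cod2 S t' = dom2 S k'" "V t' k' \<approx> Id (dom2 S k')"
    "V k' t' \<approx> Id (cod2 S k')" using j by (auto simp: inverses_def)
  have d: "dom2 S k' = dom2 S k" "cod2 S k' = cod2 S k" using beqD[OF e] by auto
  have "t \<approx> V t (Id (cod2 S k))" by (rule eq_sym[OF V_Id_right]) (use o in auto)
  also have "\<dots> \<approx> V t (V k' t')" by (rule V_cong_right[OF eq_sym]) (use o p d in auto)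
  also have "\<dots> \<approx> V t (V k t')" by (rule V_cong_right[OF V_cong_left[OF eq_sym[OF e]]]) (use o p d in auto)
  also have "\<dots> \<approx> V (V t k) t'" by (rule eq_sym[OF V_assoc]) (use o p d in auto)
  also have "\<dots> \<approx> V (Id (dom2 S k)) t'" by (rule V_cong_left[OF o(5)]) (use o p d in auto)
  also have "\<dots> \<approx> t'" by (rule V_Id_left) (use o p d in auto)
  finally show ?thesis .
qed

lemma inverses_move: assumes i: "inverses a b" and c: "V k1 a \<approx> k0" shows "V k0 b \<approx> k1"
proof -
  have o: "ok2 S a" "ok2 S b" "dom2 S b = cod2 S a" "cod2 S b = dom2 S a" "V a b \<approx> Id (cod2 S a)"
    using i by (auto simp: inverses_def)
  have k: "ok2 S k1" "dom2 S k1 = cod2 S a" "dom2 S k0 = dom2 S a" using beqD[OF c] by auto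
  have "V k0 b \<approx> V (V k1 a) b" by (rule V_cong_left[OF eq_sym[OF c]]) (use o k in auto)
  also have "\<dots> \<approx> V k1 (V a b)" by (rule V_assoc) (use o k in auto)
  also have "\<dots> \<approx> V k1 (Id (cod2 S a))" by (rule V_cong_right[OF o(5)]) (use o k in auto)
  also have "\<dots> \<approx> k1" by (rule V_Id_right) (use o k in auto)
  finally show ?thesis .
qed

lemma inverses_swap: assumes c: "inverses c c'" and d: "inverses d d'" and e: "V b d \<approx> V c a"
  shows "V c' b \<approx> V a d'"
proof -
  have oc: "ok2 S c" "ok2 S c'" "dom2 S c' = cod2 S c" "cod2 S c' = dom2 S c" "V c' c \<approx> Id (dom2 S c)"
    using c by (auto simp: inverses_def)
  have od: "ok2 S d" "ok2 S d'" "dom2 S d' = cod2 S d" "cod2 S d' = dom2 S d" "V d d' \<approx> Id (cod2 S d)"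
    using d by (auto simp: inverses_def)
  have t: "ok2 S (V b d)" "ok2 S (V c a)" "dom2 S d = dom2 S a" "cod2 S b = cod2 S c" using beqD[OF e] by auto
  have "V c' b \<approx> V (V c' b) (Id (cod2 S d))" by (rule eq_sym[OF V_Id_right]) (use oc od t in auto)
  also have "\<dots> \<approx> V (V c' b) (V d d')" by (rule V_cong_right[OF eq_sym[OF od(5)]]) (use oc od t in auto)
  also have "\<dots> \<approx> V c' (V b (V d d'))" by (rule V_assoc) (use oc od t in auto)
  also have "\<dots> \<approx> V c' (V (V b d) d')" by (rule V_cong_right[OF eq_sym[OF V_assoc]]) (use oc od t in auto)
  also have "\<dots> \<approx> V c' (V (V c a) d')" by (rule V_cong_right[OF V_cong_left[OF e]]) (use oc od t in auto)
  also have "\<dots> \<approx> V c' (V c (V a d'))" by (rule V_cong_right[OF V_assoc]) (use oc od t in auto)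
  also have "\<dots> \<approx> V (V c' c) (V a d')" by (rule eq_sym[OF V_assoc]) (use oc od t in auto)
  also have "\<dots> \<approx> V (Id (dom2 S c)) (V a d')" by (rule V_cong_left[OF oc(5)]) (use oc od t in auto)
  also have "\<dots> \<approx> V a d'" by (rule V_Id_left) (use oc od t in auto)
  finally show ?thesis .
qed

text \<open>Kelly's lemma: both sides become equal after whiskering with a unit, by the pentagon,
  the triangle and naturality, and whiskering with a unit is cancellable.\<close>

lemma L_assoc: assumes g: "ok1 S g" and f: "ok1 S f" and gf: "src1 S g = tgt1 S f"
  shows "V (L (C g f)) (A (U (tgt1 S g)) g f) \<approx> H (L g) (Id f)"
proof -
  note [simp] = g f gf
  let ?u = "U (tgt1 S g) :: ('v,'g) w1"
  define P where "P = (V (A ?u (C ?u g) f) (H (A ?u ?u g) (Id f)) :: ('v,'g,'x) c2)"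
  have Pi: "iso P" unfolding P_def
    by (intro iso_V iso_H iso_A iso_Id) auto
  have [simp]: "ok2 S P" "dom2 S P = C (C (C ?u ?u) g) f" "cod2 S P = C ?u (C (C ?u g) f)"
    by (auto simp: P_def)
  have "V (H (Id ?u) (V (L (C g f)) (A ?u g f))) P \<approx> V (V (H (Id ?u) (L (C g f))) (H (Id ?u) (A ?u g f))) P"
    by (rule V_cong_left[OF H_Id_V]) auto
  also have "\<dots> \<approx> V (H (Id ?u) (L (C g f))) (V (H (Id ?u) (A ?u g f)) P)"
    by (rule V_assoc) auto
  also have "\<dots> \<approx> V (H (Id ?u) (L (C g f))) (V (A ?u ?u (C g f)) (A (C ?u ?u) g f))"
    unfolding P_def by (rule V_cong_right[OF eq_sym[OF pentagon]]) auto
  also have "\<dots> \<approx> V (V (H (Id ?u) (L (C g f))) (A ?u ?u (C g f))) (A (C ?u ?u) g f)"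
    by (rule eq_sym[OF V_assoc]) auto
  also have "\<dots> \<approx> V (H (R ?u) (Id (C g f))) (A (C ?u ?u) g f)"
    by (rule V_cong_left[OF triangle]) auto
  also have "\<dots> \<approx> V (H (R ?u) (H (Id g) (Id f))) (A (C ?u ?u) g f)"
    by (rule V_cong_left[OF H_cong_right[OF eq_sym[OF H_Id]]]) auto
  also have "\<dots> \<approx> V (A ?u g f) (H (H (R ?u) (Id g)) (Id f))"
    by (rule eq_sym[OF A_natural]) auto
  also have "\<dots> \<approx> V (A ?u g f) (H (V (H (Id ?u) (L g)) (A ?u ?u g)) (Id f))"
    by (rule V_cong_right[OF H_cong_left[OF eq_sym[OF triangle]]]) auto
  also have "\<dots> \<approx> V (A ?u g f) (V (H (H (Id ?u) (L g)) (Id f)) (H (A ?u ?u g) (Id f)))"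
    by (rule V_cong_right[OF H_V_Id]) auto
  also have "\<dots> \<approx> V (V (A ?u g f) (H (H (Id ?u) (L g)) (Id f))) (H (A ?u ?u g) (Id f))"
    by (rule eq_sym[OF V_assoc]) auto
  also have "\<dots> \<approx> V (V (H (Id ?u) (H (L g) (Id f))) (A ?u (C ?u g) f)) (H (A ?u ?u g) (Id f))"
    by (rule V_cong_left[OF A_natural]) auto
  also have "\<dots> \<approx> V (H (Id ?u) (H (L g) (Id f))) P"
    unfolding P_def by (rule V_assoc) auto
  finally have "H (Id ?u) (V (L (C g f)) (A ?u g f)) \<approx> H (Id ?u) (H (L g) (Id f))"
    by (rule iso_cancel_right[OF Pi]) auto
  thus ?thesis by (rule unit_whisker_cancel_left) auto
qed

lemma R_assoc: assumes g: "ok1 S g" and f: "ok1 S f" and gf: "src1 S g = tgt1 S f"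
  shows "V (H (Id g) (R f)) (A g f (U (src1 S f))) \<approx> R (C g f)"
proof -
  note [simp] = g f gf
  let ?u = "U (src1 S f) :: ('v,'g) w1"
  have iA: "iso (A g f ?u)" by (rule iso_A) auto
  have "V (A g f ?u) (H (R (C g f)) (Id ?u)) \<approx> V (A g f ?u) (V (H (Id (C g f)) (L ?u)) (A (C g f) ?u ?u))"
    by (rule V_cong_right[OF eq_sym[OF triangle]]) auto
  also have "\<dots> \<approx> V (A g f ?u) (V (H (H (Id g) (Id f)) (L ?u)) (A (C g f) ?u ?u))"
    by (rule V_cong_right[OF V_cong_left[OF H_cong_left[OF eq_sym[OF H_Id]]]]) auto
  also have "\<dots> \<approx> V (V (A g f ?u) (H (H (Id g) (Id f)) (L ?u))) (A (C g f) ?u ?u)"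
    by (rule eq_sym[OF V_assoc]) auto
  also have "\<dots> \<approx> V (V (H (Id g) (H (Id f) (L ?u))) (A g f (C ?u ?u))) (A (C g f) ?u ?u)"
    by (rule V_cong_left[OF A_natural]) auto
  also have "\<dots> \<approx> V (H (Id g) (H (Id f) (L ?u))) (V (A g f (C ?u ?u)) (A (C g f) ?u ?u))"
    by (rule V_assoc) auto
  also have "\<dots> \<approx> V (H (Id g) (H (Id f) (L ?u))) (V (H (Id g) (A f ?u ?u)) (V (A g (C f ?u) ?u) (H (A g f ?u) (Id ?u))))"
    by (rule V_cong_right[OF pentagon]) auto
  also have "\<dots> \<approx> V (V (H (Id g) (H (Id f) (L ?u))) (H (Id g) (A f ?u ?u))) (V (A g (C f ?u) ?u) (H (A g f ?u) (Id ?u)))"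
    by (rule eq_sym[OF V_assoc]) auto
  also have "\<dots> \<approx> V (H (Id g) (V (H (Id f) (L ?u)) (A f ?u ?u))) (V (A g (C f ?u) ?u) (H (A g f ?u) (Id ?u)))"
    by (rule V_cong_left[OF eq_sym[OF H_Id_V]]) auto
  also have "\<dots> \<approx> V (H (Id g) (H (R f) (Id ?u))) (V (A g (C f ?u) ?u) (H (A g f ?u) (Id ?u)))"
    by (rule V_cong_left[OF H_cong_right[OF triangle]]) auto
  also have "\<dots> \<approx> V (V (H (Id g) (H (R f) (Id ?u))) (A g (C f ?u) ?u)) (H (A g f ?u) (Id ?u))"
    by (rule eq_sym[OF V_assoc]) auto
  also have "\<dots> \<approx> V (V (A g f ?u) (H (H (Id g) (R f)) (Id ?u))) (H (A g f ?u) (Id ?u))"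
    by (rule V_cong_left[OF eq_sym[OF A_natural]]) auto
  also have "\<dots> \<approx> V (A g f ?u) (V (H (H (Id g) (R f)) (Id ?u)) (H (A g f ?u) (Id ?u)))"
    by (rule V_assoc) auto
  also have "\<dots> \<approx> V (A g f ?u) (H (V (H (Id g) (R f)) (A g f ?u)) (Id ?u))"
    by (rule V_cong_right[OF eq_sym[OF H_V_Id]]) auto
  finally have "H (R (C g f)) (Id ?u) \<approx> H (V (H (Id g) (R f)) (A g f ?u)) (Id ?u)"
    by (rule iso_cancel_left[OF iA]) auto
  hence "R (C g f) \<approx> V (H (Id g) (R f)) (A g f ?u)" by (rule unit_whisker_cancel_right) auto
  thus ?thesis by (rule eq_sym)
qed

lemma L_unit_eq_R_unit: assumes v: "v \<in> sv S" shows "L (U v) \<approx> R (U v)"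
proof -
  let ?u = "U v :: ('v,'g) w1"
  note [simp] = v
  have e: "V (L ?u) (H (Id ?u) (L ?u)) \<approx> V (L ?u) (L (C ?u ?u))" by (rule L_natural) auto
  have iL: "iso (L ?u)" by (rule iso_L) simp
  have 1: "H (Id ?u) (L ?u) \<approx> L (C ?u ?u)" by (rule iso_cancel_left[OF iL e]) simp
  have "H (L ?u) (Id ?u) \<approx> V (L (C ?u ?u)) (A ?u ?u ?u)" by (rule eq_sym[OF L_assoc[of ?u ?u, simplified]])
  also have "\<dots> \<approx> V (H (Id ?u) (L ?u)) (A ?u ?u ?u)" by (rule V_cong_left[OF eq_sym[OF 1]]) auto
  also have "\<dots> \<approx> H (R ?u) (Id ?u)" by (rule triangle) auto
  finally show ?thesis by (rule unit_whisker_cancel_right) auto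
qed

lemma L_assoc_natural:
  assumes Q: "ok1 S Q" and T: "ok1 S T" and QT: "src1 S Q = tgt1 S T" and v: "v = tgt1 S Q"
    and n: "ok2 S n" "dom2 S n = C Q T"
  shows "V (L (cod2 S n)) (V (H (Id (U v)) n) (A (U v) Q T)) \<approx> V n (H (L Q) (Id T))"
proof -
  have [simp]: "ok1 S (cod2 S n)" "tgt1 S (cod2 S n) = v"
    using boundary[OF n(1)] n(2) v by auto
  note [simp] = Q T QT v n
  have "V (L (cod2 S n)) (V (H (Id (U v)) n) (A (U v) Q T))
    \<approx> V (V (L (cod2 S n)) (H (Id (U v)) n)) (A (U v) Q T)"
    by (rule eq_sym[OF V_assoc]) auto
  also have "\<dots> \<approx> V (V n (L (C Q T))) (A (U v) Q T)"
    by (rule V_cong_left[OF L_natural]) auto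
  also have "\<dots> \<approx> V n (V (L (C Q T)) (A (U v) Q T))"
    by (rule V_assoc) auto
  also have "\<dots> \<approx> V n (H (L Q) (Id T))"
    by (rule V_cong_right) (use L_assoc[OF Q T QT] in auto)
  finally show ?thesis .
qed

lemma pentagon_whiskered:
  assumes K: "ok1 S K" and P: "ok1 S P" and Q: "ok1 S Q" and T: "ok1 S T"
    and KP: "src1 S K = tgt1 S P" and PQ: "src1 S P = tgt1 S Q" and QT: "src1 S Q = tgt1 S T"
    and n: "ok2 S n" "dom2 S n = C Q T" and m: "ok2 S m" "dom2 S m = C P (cod2 S n)"
  shows "V (V (H (Id K) m) (A K P (cod2 S n))) (V (H (Id (C K P)) n) (A (C K P) Q T))
    \<approx> V (H (Id K) (V m (V (H (Id P) n) (A P Q T)))) (V (A K (C P Q) T) (H (A K P Q) (Id T)))"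
proof -
  have [simp]: "ok1 S (cod2 S n)" "src1 S (cod2 S n) = src1 S T" "tgt1 S (cod2 S n) = tgt1 S Q"
    using boundary[OF n(1)] n(2) by auto
  note [simp] = K P Q T KP[symmetric] PQ[symmetric] QT[symmetric] n m
  let ?Z = "V (A K (C P Q) T) (H (A K P Q) (Id T))"
  have "V (V (H (Id K) m) (A K P (cod2 S n))) (V (H (Id (C K P)) n) (A (C K P) Q T))
    \<approx> V (H (Id K) m) (V (A K P (cod2 S n)) (V (H (Id (C K P)) n) (A (C K P) Q T)))"
    by (rule V_assoc) simp
  also have "\<dots> \<approx> V (H (Id K) m) (V (A K P (cod2 S n)) (V (H (H (Id K) (Id P)) n) (A (C K P) Q T)))"
    by (rule V_cong_right[OF V_cong_right[OF V_cong_left[OF H_cong_left[OF eq_sym[OF H_Id]]]]]) auto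
  also have "\<dots> \<approx> V (H (Id K) m) (V (V (A K P (cod2 S n)) (H (H (Id K) (Id P)) n)) (A (C K P) Q T))"
    by (rule V_cong_right[OF eq_sym[OF V_assoc]]) auto
  also have "\<dots> \<approx> V (H (Id K) m) (V (V (H (Id K) (H (Id P) n)) (A K P (C Q T))) (A (C K P) Q T))"
    by (rule V_cong_right[OF V_cong_left[OF A_natural]]) auto
  also have "\<dots> \<approx> V (H (Id K) m) (V (H (Id K) (H (Id P) n)) (V (A K P (C Q T)) (A (C K P) Q T)))"
    by (rule V_cong_right[OF V_assoc]) auto
  also have "\<dots> \<approx> V (H (Id K) m) (V (H (Id K) (H (Id P) n)) (V (H (Id K) (A P Q T)) ?Z))"
    by (rule V_cong_right[OF V_cong_right[OF pentagon]]) auto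
  also have "\<dots> \<approx> V (H (Id K) m) (V (V (H (Id K) (H (Id P) n)) (H (Id K) (A P Q T))) ?Z)"
    by (rule V_cong_right[OF eq_sym[OF V_assoc]]) auto
  also have "\<dots> \<approx> V (H (Id K) m) (V (H (Id K) (V (H (Id P) n) (A P Q T))) ?Z)"
    by (rule V_cong_right[OF V_cong_left[OF eq_sym[OF H_Id_V]]]) auto
  also have "\<dots> \<approx> V (V (H (Id K) m) (H (Id K) (V (H (Id P) n) (A P Q T)))) ?Z"
    by (rule eq_sym[OF V_assoc]) auto
  also have "\<dots> \<approx> V (H (Id K) (V m (V (H (Id P) n) (A P Q T)))) ?Z"
    by (rule V_cong_left[OF eq_sym[OF H_Id_V]]) auto
  finally show ?thesis .
qed

lemma A_natural_whiskered:
  assumes K: "ok1 S K" and P: "ok1 S P" and Q: "ok1 S Q" and T: "ok1 S T"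
    and KP: "src1 S K = tgt1 S P" and PQ: "src1 S P = tgt1 S Q" and QT: "src1 S Q = tgt1 S T"
    and n: "ok2 S n" "dom2 S n = C P Q" and m: "ok2 S m" "dom2 S m = C (cod2 S n) T"
  shows "V (H (Id K) (V m (H n (Id T)))) (V (A K (C P Q) T) (H (A K P Q) (Id T)))
    \<approx> V (V (H (Id K) m) (A K (cod2 S n) T)) (H (V (H (Id K) n) (A K P Q)) (Id T))"
proof -
  have [simp]: "ok1 S (cod2 S n)" "src1 S (cod2 S n) = src1 S Q" "tgt1 S (cod2 S n) = tgt1 S P"
    using boundary[OF n(1)] n(2) by auto
  note [simp] = K P Q T KP[symmetric] PQ[symmetric] QT[symmetric] n m
  have "V (H (Id K) (V m (H n (Id T)))) (V (A K (C P Q) T) (H (A K P Q) (Id T)))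
    \<approx> V (V (H (Id K) m) (H (Id K) (H n (Id T)))) (V (A K (C P Q) T) (H (A K P Q) (Id T)))"
    by (rule V_cong_left[OF H_Id_V]) auto
  also have "\<dots> \<approx> V (H (Id K) m) (V (H (Id K) (H n (Id T))) (V (A K (C P Q) T) (H (A K P Q) (Id T))))"
    by (rule V_assoc) auto
  also have "\<dots> \<approx> V (H (Id K) m) (V (V (H (Id K) (H n (Id T))) (A K (C P Q) T)) (H (A K P Q) (Id T)))"
    by (rule V_cong_right[OF eq_sym[OF V_assoc]]) auto
  also have "\<dots> \<approx> V (H (Id K) m) (V (V (A K (cod2 S n) T) (H (H (Id K) n) (Id T))) (H (A K P Q) (Id T)))"
    by (rule V_cong_right[OF V_cong_left[OF eq_sym[OF A_natural]]]) auto
  also have "\<dots> \<approx> V (H (Id K) m) (V (A K (cod2 S n) T) (V (H (H (Id K) n) (Id T)) (H (A K P Q) (Id T))))"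
    by (rule V_cong_right[OF V_assoc]) auto
  also have "\<dots> \<approx> V (H (Id K) m) (V (A K (cod2 S n) T) (H (V (H (Id K) n) (A K P Q)) (Id T)))"
    by (rule V_cong_right[OF V_cong_right[OF eq_sym[OF H_V_Id]]]) auto
  also have "\<dots> \<approx> V (V (H (Id K) m) (A K (cod2 S n) T)) (H (V (H (Id K) n) (A K P Q)) (Id T))"
    by (rule eq_sym[OF V_assoc]) auto
  finally show ?thesis .
qed

end

section \<open>Normal forms\<close>

fun flat :: "('g \<Rightarrow> 'g list) \<Rightarrow> ('v,'g) w1 \<Rightarrow> 'g list" where
  "flat gn (U v) = []" | "flat gn (G g) = gn g" | "flat gn (C g f) = flat gn g @ flat gn f"
fun nword :: "'v \<Rightarrow> 'g list \<Rightarrow> ('v,'g) w1" where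
  "nword s [] = U s" | "nword s (x#xs) = C (G x) (nword s xs)"
fun join :: "'v \<Rightarrow> 'v \<Rightarrow> 'g list \<Rightarrow> 'g list \<Rightarrow> ('v,'g,'x) c2" where
  "join s1 s2 [] l2 = L (nword s2 l2)"
| "join s1 s2 (x#xs) l2 = V (H (Id (G x)) (join s1 s2 xs l2)) (A (G x) (nword s1 xs) (nword s2 l2))"
fun canon :: "('v,'g,'x) sig \<Rightarrow> ('g \<Rightarrow> 'g list) \<Rightarrow> ('g \<Rightarrow> ('v,'g,'x) c2) \<Rightarrow> ('v,'g) w1 \<Rightarrow> ('v,'g,'x) c2" where
  "canon S gn gc (U v) = Id (U v)" | "canon S gn gc (G g) = gc g"
| "canon S gn gc (C g f) = V (join (src1 S g) (src1 S f) (flat gn g) (flat gn f)) (H (canon S gn gc g) (canon S gn gc f))"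

lemma nword_src[simp]: "src1 S (nword s l) = s" by (induction l) auto
context presentation begin

lemma nword_append: "ok1 S (nword s1 l1) \<Longrightarrow> ok1 S (nword s2 l2) \<Longrightarrow> s1 = tgt1 S (nword s2 l2) \<Longrightarrow>
   ok1 S (nword s2 (l1@l2)) \<and> tgt1 S (nword s2 (l1@l2)) = tgt1 S (nword s1 l1)"
  by (induction l1) auto

lemma join_boundary: "ok1 S (nword s1 l1) \<Longrightarrow> ok1 S (nword s2 l2) \<Longrightarrow> s1 = tgt1 S (nword s2 l2) \<Longrightarrow>
   ok2 S (join s1 s2 l1 l2) \<and> dom2 S (join s1 s2 l1 l2) = C (nword s1 l1) (nword s2 l2)
   \<and> cod2 S (join s1 s2 l1 l2) = nword s2 (l1@l2) \<and> iso (join s1 s2 l1 l2)"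
proof (induction l1)
  case Nil
  then show ?case by (auto intro: iso_L)
next
  case (Cons x xs)
  then have h: "ok1 S (nword s1 xs)" "x \<in> sg S" "sgs S x = tgt1 S (nword s1 xs)" by auto
  have ra: "ok1 S (nword s2 (xs@l2))" "tgt1 S (nword s2 (xs@l2)) = tgt1 S (nword s1 xs)"
    using nword_append[OF h(1) Cons.prems(2,3)] by auto
  from Cons.IH[OF h(1) Cons.prems(2,3)] have ih: "ok2 S (join s1 s2 xs l2)" "dom2 S (join s1 s2 xs l2) = C (nword s1 xs) (nword s2 l2)"
    "cod2 S (join s1 s2 xs l2) = nword s2 (xs@l2)" "iso (join s1 s2 xs l2)" by auto
  show ?case using ih h ra Cons.prems
    by (auto intro!: iso_V iso_H iso_A iso_Id)
qed

lemma nword_src_vertex: "ok1 S (nword s l) \<Longrightarrow> s \<in> sv S"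
  using endpoints(1)[of "nword s l"] by simp

lemma join_ok[simp]: "ok1 S (nword s1 l1) \<Longrightarrow> ok1 S (nword s2 l2) \<Longrightarrow>
    s1 = tgt1 S (nword s2 l2) \<Longrightarrow> ok2 S (join s1 s2 l1 l2)"
  using join_boundary by blast
lemma join_dom[simp]: "ok1 S (nword s1 l1) \<Longrightarrow> ok1 S (nword s2 l2) \<Longrightarrow>
    s1 = tgt1 S (nword s2 l2) \<Longrightarrow> dom2 S (join s1 s2 l1 l2) = C (nword s1 l1) (nword s2 l2)"
  using join_boundary by blast
lemma join_cod[simp]: "ok1 S (nword s1 l1) \<Longrightarrow> ok1 S (nword s2 l2) \<Longrightarrow>
    s1 = tgt1 S (nword s2 l2) \<Longrightarrow> cod2 S (join s1 s2 l1 l2) = nword s2 (l1@l2)"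
  using join_boundary by blast

lemma join_Nil_right: "ok1 S (nword s l) \<Longrightarrow> join s s l [] \<approx> R (nword s l)"
proof (induction l)
  case Nil
  then show ?case using L_unit_eq_R_unit[of s] by simp
next
  case (Cons x xs)
  then have h[simp]: "ok1 S (nword s xs)" "x \<in> sg S" "sgs S x = tgt1 S (nword s xs)" by auto
  have [simp]: "s \<in> sv S" using nword_src_vertex[OF h(1)] .
  have "join s s (x#xs) [] = V (H (Id (G x)) (join s s xs [])) (A (G x) (nword s xs) (U s))" by simp
  also have "\<dots> \<approx> V (H (Id (G x)) (R (nword s xs))) (A (G x) (nword s xs) (U s))"
    using Cons.IH h by (intro V_cong_left H_cong_right) auto
  also have "\<dots> \<approx> R (C (G x) (nword s xs))" using R_assoc[of "G x" "nword s xs"] by simp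
  finally show ?case by simp
qed

lemma join_assoc: assumes "ok1 S (nword s1 l1)" "ok1 S (nword s2 l2)" "ok1 S (nword s3 l3)"
   "s1 = tgt1 S (nword s2 l2)" "s2 = tgt1 S (nword s3 l3)"
 shows "V (join s1 s3 l1 (l2@l3)) (V (H (Id (nword s1 l1)) (join s2 s3 l2 l3)) (A (nword s1 l1) (nword s2 l2) (nword s3 l3)))
     \<approx> V (join s2 s3 (l1@l2) l3) (H (join s1 s2 l1 l2) (Id (nword s3 l3)))"
  using assms
proof (induction l1)
  case Nil
  then show ?case using L_assoc_natural[of "nword s2 l2" "nword s3 l3" s1 "join s2 s3 l2 l3"]
    by (simp add: nword_append)
next
  case (Cons x xs)
  have h: "ok1 S (nword s1 xs)" "x \<in> sg S" "sgs S x = tgt1 S (nword s1 xs)" using Cons.prems by auto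
  have r23: "ok1 S (nword s3 (l2@l3))" "tgt1 S (nword s3 (l2@l3)) = tgt1 S (nword s2 l2)"
    using nword_append[OF Cons.prems(2,3,5)] by auto
  have r12: "ok1 S (nword s2 (xs@l2))" "tgt1 S (nword s2 (xs@l2)) = tgt1 S (nword s1 xs)"
    using nword_append[OF h(1) Cons.prems(2,4)] by auto
  note IH = Cons.IH[OF h(1) Cons.prems(2-5)]
  note [simp] = Cons.prems(2,3) Cons.prems(4,5)[symmetric] h r23 r12
  let ?X = "G x" and ?P = "nword s1 xs" and ?Q = "nword s2 l2" and ?T = "nword s3 l3"
  let ?N1 = "join s1 s3 xs (l2@l3)" and ?N23 = "join s2 s3 l2 l3" and ?N12 = "join s1 s2 xs l2"
  let ?N' = "join s2 s3 (xs@l2) l3" and ?Z = "V (A ?X (C ?P ?Q) ?T) (H (A ?X ?P ?Q) (Id ?T))"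
  have "V (V (H (Id ?X) ?N1) (A ?X ?P (nword s3 (l2@l3)))) (V (H (Id (C ?X ?P)) ?N23) (A (C ?X ?P) ?Q ?T))
    \<approx> V (H (Id ?X) (V ?N1 (V (H (Id ?P) ?N23) (A ?P ?Q ?T)))) ?Z"
    using pentagon_whiskered[of ?X ?P ?Q ?T ?N23 ?N1] by simp
  also have "\<dots> \<approx> V (H (Id ?X) (V ?N' (H ?N12 (Id ?T)))) ?Z"
    by (rule V_cong_left[OF H_cong_right[OF IH]]) auto
  also have "\<dots> \<approx> V (V (H (Id ?X) ?N') (A ?X (nword s2 (xs@l2)) ?T)) (H (V (H (Id ?X) ?N12) (A ?X ?P ?Q)) (Id ?T))"
    using A_natural_whiskered[of ?X ?P ?Q ?T ?N12 ?N'] by simp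
  finally show ?case by simp
qed

end

section \<open>Coherence from a normalisation of the generators\<close>

locale normalization = presentation S Rel for S :: "('v,'g,'x) sig" and Rel +
  fixes gn :: "'g \<Rightarrow> 'g list" and gc :: "'g \<Rightarrow> ('v,'g,'x) c2"
  assumes gen_canon: "g \<in> sg S \<Longrightarrow> ok2 S (gc g) \<and> dom2 S (gc g) = G g \<and> cod2 S (gc g) = nword (sgs S g) (gn g) \<and> iso (gc g)"
  and gen2_flat: "x \<in> sx S \<Longrightarrow> flat gn (sxd S x) = flat gn (sxc S x)"
  and gen2_canon: "x \<in> sx S \<Longrightarrow> V (canon S gn gc (sxc S x)) (X x) \<approx> canon S gn gc (sxd S x)"
begin

abbreviation "cn \<equiv> canon S gn gc"
abbreviation "fl \<equiv> flat gn"

lemma canon_boundary: "ok1 S f \<Longrightarrow>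
    ok2 S (cn f) \<and> dom2 S (cn f) = f \<and> cod2 S (cn f) = nword (src1 S f) (fl f) \<and> iso (cn f)"
proof (induction f)
  case (U x)
  then show ?case by (auto intro: iso_Id)
next
  case (G x)
  then show ?case using gen_canon[of x] by auto
next
  case (C g1 f1)
  then have o: "ok1 S g1" "ok1 S f1" "src1 S g1 = tgt1 S f1" by auto
  have tg: "ok1 S (nword (src1 S g1) (fl g1))" "tgt1 S (nword (src1 S g1) (fl g1)) = tgt1 S g1"
    using C.IH(1)[OF o(1)] boundary[of "cn g1"] by auto
  have tf: "ok1 S (nword (src1 S f1) (fl f1))" "tgt1 S (nword (src1 S f1) (fl f1)) = tgt1 S f1"
    using C.IH(2)[OF o(2)] boundary[of "cn f1"] by auto
  have n: "ok2 S (join (src1 S g1) (src1 S f1) (fl g1) (fl f1))"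
     "dom2 S (join (src1 S g1) (src1 S f1) (fl g1) (fl f1)) = C (nword (src1 S g1) (fl g1)) (nword (src1 S f1) (fl f1))"
     "cod2 S (join (src1 S g1) (src1 S f1) (fl g1) (fl f1)) = nword (src1 S f1) (fl g1 @ fl f1)"
     "iso (join (src1 S g1) (src1 S f1) (fl g1) (fl f1))"
    using join_boundary[OF tg(1) tf(1)] tf o by auto
  show ?case using n C.IH(1)[OF o(1)] C.IH(2)[OF o(2)] o tg tf by (auto intro!: iso_V iso_H)
qed

lemma canon_ok[simp]: "ok1 S f \<Longrightarrow> ok2 S (cn f)" using canon_boundary by blast
lemma canon_dom[simp]: "ok1 S f \<Longrightarrow> dom2 S (cn f) = f" using canon_boundary by blast
lemma canon_cod[simp]: "ok1 S f \<Longrightarrow> cod2 S (cn f) = nword (src1 S f) (fl f)"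
  using canon_boundary by blast
lemma canon_iso: "ok1 S f \<Longrightarrow> iso (cn f)" using canon_boundary by blast
lemma canon_nword[simp]: "ok1 S f \<Longrightarrow> ok1 S (nword (src1 S f) (fl f))"
  using boundary[of "cn f"] by simp
lemma canon_nword_tgt[simp]: "ok1 S f \<Longrightarrow> tgt1 S (nword (src1 S f) (fl f)) = tgt1 S f"
  using boundary[of "cn f"] by simp

lemma canon_natural_A: assumes h: "ok1 S h" and g: "ok1 S g" and f: "ok1 S f"
  and hg: "src1 S h = tgt1 S g" and gf: "src1 S g = tgt1 S f"
  shows "V (cn (C h (C g f))) (A h g f) \<approx> cn (C (C h g) f)"
proof -
  note [simp] = h g f hg[symmetric] gf[symmetric]
  let ?rh = "nword (src1 S h) (fl h)" and ?rg = "nword (src1 S g) (fl g)" and ?rf = "nword (src1 S f) (fl f)"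
  let ?Nh = "join (src1 S h) (src1 S f) (fl h) (fl g @ fl f)" and ?N23 = "join (src1 S g) (src1 S f) (fl g) (fl f)"
  let ?N' = "join (src1 S g) (src1 S f) (fl h @ fl g) (fl f)" and ?N12 = "join (src1 S h) (src1 S g) (fl h) (fl g)"
  have [simp]: "src1 S g \<in> sv S" "src1 S f \<in> sv S" "src1 S h \<in> sv S" by auto
  have na: "V ?Nh (V (H (Id ?rh) ?N23) (A ?rh ?rg ?rf)) \<approx> V ?N' (H ?N12 (Id ?rf))"
    by (rule join_assoc) simp_all
  have r0: "ok1 S (nword (src1 S f) (fl g @ fl f)) \<and> tgt1 S (nword (src1 S f) (fl g @ fl f)) = tgt1 S (nword (src1 S g) (fl g))"
    by (rule nword_append[OF canon_nword[OF g] canon_nword[OF f]]) simp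
  have r[simp]: "ok1 S (nword (src1 S f) (fl g @ fl f))" "tgt1 S (nword (src1 S f) (fl g @ fl f)) = src1 S h"
    using r0 canon_nword_tgt[OF g] by simp_all
  have r1: "ok1 S (nword (src1 S g) (fl h @ fl g)) \<and> tgt1 S (nword (src1 S g) (fl h @ fl g)) = tgt1 S (nword (src1 S h) (fl h))"
    by (rule nword_append[OF canon_nword[OF h] canon_nword[OF g]]) simp
  have r'[simp]: "ok1 S (nword (src1 S g) (fl h @ fl g))" "tgt1 S (nword (src1 S g) (fl h @ fl g)) = tgt1 S h"
    using r1 canon_nword_tgt[OF h] by simp_all
  have "V (cn (C h (C g f))) (A h g f) = V (V ?Nh (H (cn h) (V ?N23 (H (cn g) (cn f))))) (A h g f)" by simp
  also have "\<dots> \<approx> V ?Nh (V (H (cn h) (V ?N23 (H (cn g) (cn f)))) (A h g f))"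
    by (rule V_assoc) simp
  also have "\<dots> \<approx> V ?Nh (V (H (V (Id ?rh) (cn h)) (V ?N23 (H (cn g) (cn f)))) (A h g f))"
    by (rule V_cong_right[OF V_cong_left[OF H_cong_left[OF eq_sym[OF V_Id_left]]]]) auto
  also have "\<dots> \<approx> V ?Nh (V (V (H (Id ?rh) ?N23) (H (cn h) (H (cn g) (cn f)))) (A h g f))"
    by (rule V_cong_right[OF V_cong_left[OF interchange]]) auto
  also have "\<dots> \<approx> V ?Nh (V (H (Id ?rh) ?N23) (V (H (cn h) (H (cn g) (cn f))) (A h g f)))"
    by (rule V_cong_right[OF V_assoc]) auto
  also have "\<dots> \<approx> V ?Nh (V (H (Id ?rh) ?N23) (V (A ?rh ?rg ?rf) (H (H (cn h) (cn g)) (cn f))))"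
    by (rule V_cong_right[OF V_cong_right[OF eq_sym[OF A_natural]]]) auto
  also have "\<dots> \<approx> V ?Nh (V (V (H (Id ?rh) ?N23) (A ?rh ?rg ?rf)) (H (H (cn h) (cn g)) (cn f)))"
    by (rule V_cong_right[OF eq_sym[OF V_assoc]]) auto
  also have "\<dots> \<approx> V (V ?Nh (V (H (Id ?rh) ?N23) (A ?rh ?rg ?rf))) (H (H (cn h) (cn g)) (cn f))"
    by (rule eq_sym[OF V_assoc]) auto
  also have "\<dots> \<approx> V (V ?N' (H ?N12 (Id ?rf))) (H (H (cn h) (cn g)) (cn f))"
    by (rule V_cong_left[OF na]) auto
  also have "\<dots> \<approx> V ?N' (V (H ?N12 (Id ?rf)) (H (H (cn h) (cn g)) (cn f)))"
    by (rule V_assoc) auto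
  also have "\<dots> \<approx> V ?N' (H (V ?N12 (H (cn h) (cn g))) (V (Id ?rf) (cn f)))"
    by (rule V_cong_right[OF eq_sym[OF interchange]]) auto
  also have "\<dots> \<approx> V ?N' (H (V ?N12 (H (cn h) (cn g))) (cn f))"
    by (rule V_cong_right[OF H_cong_right[OF V_Id_left]]) auto
  finally show ?thesis by simp
qed

lemma canon_natural_L: assumes f: "ok1 S f" shows "V (cn f) (L f) \<approx> cn (C (U (tgt1 S f)) f)"
proof -
  have "V (cn f) (L f) \<approx> V (L (nword (src1 S f) (fl f))) (H (Id (U (tgt1 S f))) (cn f))"
    by (rule eq_sym[OF L_natural]) (use f in auto)
  thus ?thesis by simp
qed

lemma canon_natural_R: assumes f: "ok1 S f" shows "V (cn f) (R f) \<approx> cn (C f (U (src1 S f)))"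
proof -
  have [simp]: "src1 S f \<in> sv S" using f by simp
  have "V (cn f) (R f) \<approx> V (R (nword (src1 S f) (fl f))) (H (cn f) (Id (U (src1 S f))))"
    by (rule eq_sym[OF R_natural]) (use f in auto)
  also have "\<dots> \<approx> V (join (src1 S f) (src1 S f) (fl f) []) (H (cn f) (Id (U (src1 S f))))"
    by (rule V_cong_left[OF eq_sym[OF join_Nil_right]]) (use f in auto)
  finally show ?thesis by simp
qed

lemma canon_natural_inverse: assumes i: "inverses a b" and c: "V (cn (cod2 S a)) a \<approx> cn (dom2 S a)"
  shows "V (cn (cod2 S b)) b \<approx> cn (dom2 S b)"
proof -
  have o: "ok2 S a" "ok2 S b" "dom2 S b = cod2 S a" "cod2 S b = dom2 S a" "V a b \<approx> Id (cod2 S a)"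
    using i by (auto simp: inverses_def)
  have t: "ok1 S (dom2 S a)" "ok1 S (cod2 S a)" using boundary[OF o(1)] by auto
  have "V (cn (cod2 S b)) b = V (cn (dom2 S a)) b" using o by simp
  also have "\<dots> \<approx> V (V (cn (cod2 S a)) a) b" by (rule V_cong_left[OF eq_sym[OF c]]) (use o t in auto)
  also have "\<dots> \<approx> V (cn (cod2 S a)) (V a b)" by (rule V_assoc) (use o t in auto)
  also have "\<dots> \<approx> V (cn (cod2 S a)) (Id (cod2 S a))" by (rule V_cong_right[OF o(5)]) (use o t in auto)
  also have "\<dots> \<approx> cn (cod2 S a)" by (rule V_Id_right) (use o t in auto)
  finally show ?thesis using o by simp
qed

lemma canon_natural_H:
  assumes ba: "ok2 S (H b a)"
    and b: "fl (dom2 S b) = fl (cod2 S b)" "V (cn (cod2 S b)) b \<approx> cn (dom2 S b)"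
    and a: "fl (dom2 S a) = fl (cod2 S a)" "V (cn (cod2 S a)) a \<approx> cn (dom2 S a)"
  shows "V (cn (cod2 S (H b a))) (H b a) \<approx> cn (dom2 S (H b a))"
proof -
  have o: "ok2 S b" "ok2 S a" "tgt1 S (dom2 S a) = src1 S (dom2 S b)" using ba by auto
  have t: "ok1 S (dom2 S a)" "ok1 S (cod2 S a)" "ok1 S (cod2 S b)" "ok1 S (dom2 S b)"
    "src1 S (cod2 S a) = src1 S (dom2 S a)" "src1 S (cod2 S b) = src1 S (dom2 S b)"
    "tgt1 S (cod2 S a) = tgt1 S (dom2 S a)" "tgt1 S (cod2 S b) = tgt1 S (dom2 S b)"
    using boundary o by auto
  note [simp] = o t a(1)[symmetric] b(1)[symmetric]
  let ?N = "join (src1 S (dom2 S b)) (src1 S (dom2 S a)) (fl (dom2 S b)) (fl (dom2 S a))"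
  have "V (cn (cod2 S (H b a))) (H b a) = V (V ?N (H (cn (cod2 S b)) (cn (cod2 S a)))) (H b a)"
    by simp
  also have "\<dots> \<approx> V ?N (V (H (cn (cod2 S b)) (cn (cod2 S a))) (H b a))"
    by (rule V_assoc) auto
  also have "\<dots> \<approx> V ?N (H (V (cn (cod2 S b)) b) (V (cn (cod2 S a)) a))"
    by (rule V_cong_right[OF eq_sym[OF interchange]]) auto
  also have "\<dots> \<approx> V ?N (H (cn (dom2 S b)) (cn (dom2 S a)))"
    by (rule V_cong_right[OF H_cong[OF b(2) a(2)]]) auto
  finally show ?thesis by simp
qed

lemma canon_natural: "ok2 S a \<Longrightarrow> fl (dom2 S a) = fl (cod2 S a) \<and> V (cn (cod2 S a)) a \<approx> cn (dom2 S a)"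
proof (induction a)
  case (Id f)
  then show ?case by (auto intro: V_Id_right)
next
  case (V b a)
  then have o: "ok2 S b" "ok2 S a" "cod2 S a = dom2 S b" by auto
  note ih = V.IH(1)[OF o(1)] V.IH(2)[OF o(2)]
  have t: "ok1 S (dom2 S a)" "ok1 S (cod2 S a)" "ok1 S (cod2 S b)" using boundary o by auto
  have "V (cn (cod2 S b)) (V b a) \<approx> V (V (cn (cod2 S b)) b) a" by (rule eq_sym[OF V_assoc]) (use o t in auto)
  also have "\<dots> \<approx> V (cn (dom2 S b)) a" by (rule V_cong_left) (use o t ih in auto)
  also have "\<dots> \<approx> cn (dom2 S a)" using ih o by simp
  finally show ?case using ih o by simp
next
  case (H b a)
  then show ?case using canon_natural_H[of b a] by auto
next
  case (A h g f)
  then show ?case using canon_natural_A by auto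
next
  case (Ai h g f)
  then have "inverses (A h g f) (Ai h g f)" by (auto intro: inverses_A)
  then show ?case using canon_natural_inverse[of "A h g f" "Ai h g f"] canon_natural_A Ai by auto
next
  case (L f)
  then show ?case using canon_natural_L by auto
next
  case (Li f)
  then have "inverses (L f) (Li f)" by (auto intro: inverses_L)
  then show ?case using canon_natural_inverse[of "L f" "Li f"] canon_natural_L Li by auto
next
  case (R f)
  then show ?case using canon_natural_R by auto
next
  case (Ri f)
  then have "inverses (R f) (Ri f)" by (auto intro: inverses_R)
  then show ?case using canon_natural_inverse[of "R f" "Ri f"] canon_natural_R Ri by auto
next
  case (X x)
  then show ?case using gen2_canon gen2_flat by auto
qed

theorem hom_thin_if_normalizable: "hom_thin S Rel"
  unfolding hom_thin_def
proof (intro allI impI)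
  fix a b assume h: "ok2 S a \<and> ok2 S b \<and> dom2 S a = dom2 S b \<and> cod2 S a = cod2 S b"
  then have t: "ok1 S (cod2 S a)" using boundary by blast
  have "V (cn (cod2 S a)) a \<approx> cn (dom2 S a)" using canon_natural h by blast
  also have "\<dots> \<approx> V (cn (cod2 S a)) b" using canon_natural[of b] h by (auto intro: eq_sym)
  finally show "a \<approx> b" by (rule iso_cancel_left[OF canon_iso[OF t]]) (use h t in auto)
qed

end

section \<open>The bicategories F(G) and M(H)\<close>

lemma FS_simps[simp]: "sv (FS Gr) = verts Gr" "sg (FS Gr) = arcs Gr" "sgs (FS Gr) = gsrc Gr"
  "sgt (FS Gr) = gtgt Gr" "sx (FS Gr) = {}"
  by (auto simp: FS_def)

lemma MS_simps[simp]: "sv (MS Gr Mg hv he) = verts Mg"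
  "(Inl m \<in> sg (MS Gr Mg hv he)) = (m \<in> arcs Mg)"
  "(Inr w \<in> sg (MS Gr Mg hv he)) = (ok1 (FS Gr) w \<and> (\<forall>e. w \<noteq> G e))"
  "sgs (MS Gr Mg hv he) (Inl m) = gsrc Mg m" "sgt (MS Gr Mg hv he) (Inl m) = gtgt Mg m"
  "sgs (MS Gr Mg hv he) (Inr w) = hv (src1 (FS Gr) w)" "sgt (MS Gr Mg hv he) (Inr w) = hv (tgt1 (FS Gr) w)"
  "(PhiMap a \<in> sx (MS Gr Mg hv he)) = ok2 (FS Gr) a"
  "(PhiC g f \<in> sx (MS Gr Mg hv he)) = (ok1 (FS Gr) g \<and> ok1 (FS Gr) f \<and> src1 (FS Gr) g = tgt1 (FS Gr) f)"
  "(PhiCi g f \<in> sx (MS Gr Mg hv he)) = (ok1 (FS Gr) g \<and> ok1 (FS Gr) f \<and> src1 (FS Gr) g = tgt1 (FS Gr) f)"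
  "(PhiU v \<in> sx (MS Gr Mg hv he)) = (v \<in> verts Gr)"
  "(PhiUi v \<in> sx (MS Gr Mg hv he)) = (v \<in> verts Gr)"
  "sxd (MS Gr Mg hv he) = mxd hv he Gr" "sxc (MS Gr Mg hv he) = mxc hv he Gr"
  by (auto simp: MS_def)

lemma wf_sig_FS: "wf_graph Gr \<Longrightarrow> wf_sig (FS Gr)"
  by (auto simp: wf_sig_def wf_graph_def)

definition lift_arcs :: "('b \<Rightarrow> 'd) \<Rightarrow> 'b list \<Rightarrow> ('d + ('a,'b) w1) list" where
  "lift_arcs he l = map (Inl \<circ> he) l"

lemma lift_arcs_simps[simp]: "lift_arcs he [] = []" "lift_arcs he (e#l) = Inl (he e) # lift_arcs he l"
  "lift_arcs he (l1@l2) = lift_arcs he l1 @ lift_arcs he l2"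
  by (auto simp: lift_arcs_def)

fun phi_cmp :: "('b \<Rightarrow> 'd) \<Rightarrow> 'a \<Rightarrow> 'b list \<Rightarrow> ('c, 'd + ('a,'b) w1, ('a,'b) mx) c2" where
  "phi_cmp he s [] = X (PhiU s)"
| "phi_cmp he s (e#l) = V (X (PhiC (G e) (nword s l))) (H (Id (G (Inl (he e)))) (phi_cmp he s l))"
fun phi_cmp_inv :: "('b \<Rightarrow> 'd) \<Rightarrow> 'a \<Rightarrow> 'b list \<Rightarrow> ('c, 'd + ('a,'b) w1, ('a,'b) mx) c2" where
  "phi_cmp_inv he s [] = X (PhiUi s)"
| "phi_cmp_inv he s (e#l) = V (H (Id (G (Inl (he e)))) (phi_cmp_inv he s l)) (X (PhiCi (G e) (nword s l)))"

abbreviation flatF :: "('a,'b) w1 \<Rightarrow> 'b list" where "flatF \<equiv> flat (\<lambda>e. [e])"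
abbreviation canonF :: "('a,'b) graph \<Rightarrow> ('a,'b) w1 \<Rightarrow> ('a,'b,unit) c2" where
  "canonF Gr \<equiv> canon (FS Gr) (\<lambda>e. [e]) (\<lambda>e. Ri (G e))"

definition phi_canon :: "('a,'b) graph \<Rightarrow> ('b \<Rightarrow> 'd) \<Rightarrow> ('a,'b) w1 \<Rightarrow> ('c, 'd + ('a,'b) w1, ('a,'b) mx) c2" where
  "phi_canon Gr he w = V (phi_cmp_inv he (src1 (FS Gr) w) (flatF w)) (X (PhiMap (canonF Gr w)))"

fun gen_flatM :: "('b \<Rightarrow> 'd) \<Rightarrow> 'd + ('a,'b) w1 \<Rightarrow> ('d + ('a,'b) w1) list" where
  "gen_flatM he (Inl m) = [Inl m]" | "gen_flatM he (Inr w) = lift_arcs he (flatF w)"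
fun gen_canonM :: "('a,'b) graph \<Rightarrow> ('b \<Rightarrow> 'd) \<Rightarrow> 'd + ('a,'b) w1 \<Rightarrow> ('c, 'd + ('a,'b) w1, ('a,'b) mx) c2" where
  "gen_canonM Gr he (Inl m) = Ri (G (Inl m))" | "gen_canonM Gr he (Inr w) = phi_canon Gr he w"

locale graph_map =
  fixes Gr :: "('a,'b) graph" and Mg :: "('c,'d) graph" and hv :: "'a \<Rightarrow> 'c" and he :: "'b \<Rightarrow> 'd"
  assumes wg: "wf_graph Gr" and wm: "wf_graph Mg" and gh: "graph_hom Gr Mg hv he"
begin

abbreviation "FG \<equiv> FS Gr"
abbreviation "MH \<equiv> MS Gr Mg hv he"
abbreviation "R0 \<equiv> (\<lambda>_ _. False) :: ('a,'b,unit) c2 \<Rightarrow> ('a,'b,unit) c2 \<Rightarrow> bool"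

sublocale F: presentation FG R0 by unfold_locales (rule wf_sig_FS[OF wg])

lemma Ri_arc_iso: "e \<in> arcs Gr \<Longrightarrow> F.iso (Ri (G e))"
  using F.inverses_R[of "G e"] F.inverses_iso by auto

sublocale F: normalization FG R0 "\<lambda>e. [e]" "\<lambda>e. Ri (G e)"
  by unfold_locales (auto intro: Ri_arc_iso)

abbreviation "Rm \<equiv> mrel Gr hv he"
abbreviation meq (infix "\<cong>" 50) where "a \<cong> b \<equiv> beq MH Rm a b"
abbreviation fq (infix "\<sim>" 50) where "a \<sim> b \<equiv> beq FG R0 a b"

lemma hv_vertex: "v \<in> verts Gr \<Longrightarrow> hv v \<in> verts Mg" using gh by (auto simp: graph_hom_def)
lemma he_arc: "e \<in> arcs Gr \<Longrightarrow>
    he e \<in> arcs Mg \<and> gsrc Mg (he e) = hv (gsrc Gr e) \<and> gtgt Mg (he e) = hv (gtgt Gr e)"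
  using gh by (auto simp: graph_hom_def)

lemma phi1_typ: "ok1 FG w \<Longrightarrow>
    ok1 MH (phi1 he w) \<and> src1 MH (phi1 he w) = hv (src1 FG w) \<and> tgt1 MH (phi1 he w) = hv (tgt1 FG w)"
  by (cases w) (auto simp: he_arc)

lemma phi1_ok[simp]: "ok1 FG w \<Longrightarrow> ok1 MH (phi1 he w)" using phi1_typ by blast
lemma phi1_src[simp]: "ok1 FG w \<Longrightarrow> src1 MH (phi1 he w) = hv (src1 FG w)" using phi1_typ by blast
lemma phi1_tgt[simp]: "ok1 FG w \<Longrightarrow> tgt1 MH (phi1 he w) = hv (tgt1 FG w)" using phi1_typ by blast

lemma F_endpoints: "ok1 FG f \<Longrightarrow> src1 FG f \<in> verts Gr" "ok1 FG f \<Longrightarrow> tgt1 FG f \<in> verts Gr"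
  using F.endpoints by auto

lemma wf_sig_MS: "wf_sig MH"
proof -
  have 1: "\<forall>g\<in>sg MH. sgs MH g \<in> sv MH \<and> sgt MH g \<in> sv MH"
  proof
    fix g assume "g \<in> sg MH"
    then show "sgs MH g \<in> sv MH \<and> sgt MH g \<in> sv MH"
      using wm by (cases g) (auto simp: wf_graph_def intro!: hv_vertex F_endpoints)
  qed
  have 2: "\<forall>x\<in>sx MH. ok1 MH (sxd MH x) \<and> ok1 MH (sxc MH x) \<and> src1 MH (sxd MH x) = src1 MH (sxc MH x) \<and>
        tgt1 MH (sxd MH x) = tgt1 MH (sxc MH x)"
  proof
    fix x assume x: "x \<in> sx MH"
    show "ok1 MH (sxd MH x) \<and> ok1 MH (sxc MH x) \<and> src1 MH (sxd MH x) = src1 MH (sxc MH x) \<and>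
        tgt1 MH (sxd MH x) = tgt1 MH (sxc MH x)"
    proof (cases x)
      case (PhiMap a)
      then show ?thesis using x F.boundary[of a] by auto
    qed (use x hv_vertex in auto)
  qed
  show ?thesis using 1 2 by (simp add: wf_sig_def)
qed

sublocale M: presentation MH Rm by unfold_locales (rule wf_sig_MS)

lemma mrel_beq: "Rm a b \<Longrightarrow> ok2 MH a \<Longrightarrow> ok2 MH b \<Longrightarrow> dom2 MH a = dom2 MH b \<Longrightarrow>
    cod2 MH a = cod2 MH b \<Longrightarrow> a \<cong> b"
  by (rule beq.gen) auto

lemma Phi_Id: "ok1 FG w \<Longrightarrow> X (PhiMap (Id w)) \<cong> Id (phi1 he w)"
  by (rule mrel_beq) (auto intro: mrel.fid)
lemma Phi_V: "ok2 FG (V b a) \<Longrightarrow> X (PhiMap (V b a)) \<cong> V (X (PhiMap b)) (X (PhiMap a))"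
  by (rule mrel_beq) (auto intro: mrel.fcomp)
lemma Phi_cong: "a \<sim> b \<Longrightarrow> X (PhiMap a) \<cong> X (PhiMap b)"
  by (rule mrel_beq) (auto intro: mrel.resp dest: F.beqD)
lemma PhiC_natural: "ok2 FG (H b a) \<Longrightarrow>
  V (X (PhiC (cod2 FG b) (cod2 FG a))) (H (X (PhiMap b)) (X (PhiMap a))) \<cong> V (X (PhiMap (H b a))) (X (PhiC (dom2 FG b) (dom2 FG a)))"
  using F.boundary[of a] F.boundary[of b] by (intro mrel_beq) (auto intro: mrel.cnat)
lemma Phi_assoc: "ok1 FG h \<Longrightarrow> ok1 FG g \<Longrightarrow> ok1 FG f \<Longrightarrow> src1 FG h = tgt1 FG g \<Longrightarrow> src1 FG g = tgt1 FG f \<Longrightarrow>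
  V (X (PhiMap (A h g f))) (V (X (PhiC (C h g) f)) (H (X (PhiC h g)) (Id (phi1 he f))))
  \<cong> V (X (PhiC h (C g f))) (V (H (Id (phi1 he h)) (X (PhiC g f))) (A (phi1 he h) (phi1 he g) (phi1 he f)))"
  by (rule mrel_beq) (auto intro: mrel.assoc)
lemma Phi_lunit: "ok1 FG f \<Longrightarrow>
  V (X (PhiMap (L f))) (V (X (PhiC (U (tgt1 FG f)) f)) (H (X (PhiU (tgt1 FG f))) (Id (phi1 he f)))) \<cong> L (phi1 he f)"
  by (rule mrel_beq) (auto intro: mrel.lunit hv_vertex F_endpoints)
lemma Phi_runit: "ok1 FG f \<Longrightarrow>
  V (X (PhiMap (R f))) (V (X (PhiC f (U (src1 FG f)))) (H (Id (phi1 he f)) (X (PhiU (src1 FG f))))) \<cong> R (phi1 he f)"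
  by (rule mrel_beq) (auto intro: mrel.runit hv_vertex F_endpoints)

lemma nword_lift: "ok1 FG (nword s l) \<Longrightarrow>
    ok1 MH (nword (hv s) (lift_arcs he l)) \<and> tgt1 MH (nword (hv s) (lift_arcs he l)) = hv (tgt1 FG (nword s l))"
  by (induction l) (auto simp: he_arc hv_vertex)

lemma nword_lift_ok[simp]: "ok1 FG (nword s l) \<Longrightarrow> ok1 MH (nword (hv s) (lift_arcs he l))"
  using nword_lift by blast
lemma nword_lift_tgt[simp]: "ok1 FG (nword s l) \<Longrightarrow>
    tgt1 MH (nword (hv s) (lift_arcs he l)) = hv (tgt1 FG (nword s l))"
  using nword_lift by blast

lemma PhiC_inverses: "ok1 FG g \<Longrightarrow> ok1 FG f \<Longrightarrow> src1 FG g = tgt1 FG f \<Longrightarrow>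
    M.inverses (X (PhiC g f)) (X (PhiCi g f))"
  by (auto simp: M.inverses_def intro!: mrel_beq mrel.cinv1 mrel.cinv2[simplified])
lemma PhiU_inverses: "v \<in> verts Gr \<Longrightarrow> M.inverses (X (PhiU v)) (X (PhiUi v))"
  by (auto simp: M.inverses_def intro!: mrel_beq mrel.uinv1 mrel.uinv2[simplified] hv_vertex)

lemma phi_cmp_boundary: "ok1 FG (nword s l) \<Longrightarrow> ok2 MH (phi_cmp he s l) \<and> dom2 MH (phi_cmp he s l) = nword (hv s) (lift_arcs he l)
   \<and> cod2 MH (phi_cmp he s l) = phi1 he (nword s l) \<and> M.inverses (phi_cmp he s l) (phi_cmp_inv he s l)"
proof (induction l)
  case Nil
  then show ?case using PhiU_inverses[of s] by simp
next
  case (Cons e l)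
  then have h: "ok1 FG (nword s l)" "e \<in> arcs Gr" "gsrc Gr e = tgt1 FG (nword s l)" by auto
  note ih = Cons.IH[OF h(1)]
  have i1: "M.inverses (H (Id (G (Inl (he e)))) (phi_cmp he s l)) (H (Id (G (Inl (he e)))) (phi_cmp_inv he s l))"
    by (rule M.inverses_H[OF _ M.inverses_Id]) (use ih h he_arc[OF h(2)] in auto)
  have i2: "M.inverses (X (PhiC (G e) (nword s l))) (X (PhiCi (G e) (nword s l)))"
    by (rule PhiC_inverses) (use h in auto)
  have ip: "M.inverses (V (X (PhiC (G e) (nword s l))) (H (Id (G (Inl (he e)))) (phi_cmp he s l)))
     (V (H (Id (G (Inl (he e)))) (phi_cmp_inv he s l)) (X (PhiCi (G e) (nword s l))))"
    by (rule M.inverses_V[OF i1 i2]) (use ih h in auto)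
  have ok: "ok2 MH (phi_cmp he s (e#l))" using M.iso_ok[OF M.inverses_iso(1)[OF ip]] by simp
  have d: "dom2 MH (phi_cmp he s (e#l)) = nword (hv s) (lift_arcs he (e#l))" using ih h by simp
  have c: "cod2 MH (phi_cmp he s (e#l)) = phi1 he (nword s (e#l))" by simp
  show ?case using ok d c ip by simp
qed

lemma phi_cmp_ok[simp]: "ok1 FG (nword s l) \<Longrightarrow> ok2 MH (phi_cmp he s l)"
  using phi_cmp_boundary by blast
lemma phi_cmp_dom[simp]: "ok1 FG (nword s l) \<Longrightarrow>
    dom2 MH (phi_cmp he s l) = nword (hv s) (lift_arcs he l)"
  using phi_cmp_boundary by blast
lemma phi_cmp_cod[simp]: "ok1 FG (nword s l) \<Longrightarrow> cod2 MH (phi_cmp he s l) = phi1 he (nword s l)"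
  using phi_cmp_boundary by blast
lemma phi_cmp_inverses: "ok1 FG (nword s l) \<Longrightarrow> M.inverses (phi_cmp he s l) (phi_cmp_inv he s l)"
  using phi_cmp_boundary by blast
lemma phi_cmp_inv_ok[simp]: "ok1 FG (nword s l) \<Longrightarrow> ok2 MH (phi_cmp_inv he s l)"
  using phi_cmp_inverses M.inverses_def by blast
lemma phi_cmp_inv_dom[simp]: "ok1 FG (nword s l) \<Longrightarrow>
    dom2 MH (phi_cmp_inv he s l) = phi1 he (nword s l)"
  using phi_cmp_inverses[of s l] M.inverses_def by simp
lemma phi_cmp_inv_cod[simp]: "ok1 FG (nword s l) \<Longrightarrow>
    cod2 MH (phi_cmp_inv he s l) = nword (hv s) (lift_arcs he l)"
  using phi_cmp_inverses[of s l] M.inverses_def by simp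

abbreviation "canonM \<equiv> canon MH (gen_flatM he) (gen_canonM Gr he)"
abbreviation "flatM \<equiv> flat (gen_flatM he)"

lemma Phi_inverses: assumes "F.inverses a b" shows "M.inverses (X (PhiMap a)) (X (PhiMap b))"
proof -
  have o: "ok2 FG a" "ok2 FG b" "dom2 FG b = cod2 FG a" "cod2 FG b = dom2 FG a"
    "V b a \<sim> Id (dom2 FG a)" "V a b \<sim> Id (cod2 FG a)" using assms by (auto simp: F.inverses_def)
  have t: "ok1 FG (dom2 FG a)" "ok1 FG (cod2 FG a)" using F.boundary[OF o(1)] by auto
  have "V (X (PhiMap b)) (X (PhiMap a)) \<cong> X (PhiMap (V b a))" by (rule M.eq_sym[OF Phi_V]) (use o in auto)
  also have "\<dots> \<cong> X (PhiMap (Id (dom2 FG a)))" by (rule Phi_cong[OF o(5)])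
  also have "\<dots> \<cong> Id (phi1 he (dom2 FG a))" by (rule Phi_Id[OF t(1)])
  finally have 1: "V (X (PhiMap b)) (X (PhiMap a)) \<cong> Id (phi1 he (dom2 FG a))" .
  have "V (X (PhiMap a)) (X (PhiMap b)) \<cong> X (PhiMap (V a b))" by (rule M.eq_sym[OF Phi_V]) (use o in auto)
  also have "\<dots> \<cong> X (PhiMap (Id (cod2 FG a)))" by (rule Phi_cong[OF o(6)])
  also have "\<dots> \<cong> Id (phi1 he (cod2 FG a))" by (rule Phi_Id[OF t(2)])
  finally have 2: "V (X (PhiMap a)) (X (PhiMap b)) \<cong> Id (phi1 he (cod2 FG a))" .
  show ?thesis unfolding M.inverses_def using 1 2 o by simp
qed

lemma Phi_iso: "F.iso a \<Longrightarrow> M.iso (X (PhiMap a))"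
  using Phi_inverses M.iso_def F.iso_def by blast

lemma phi_canon_boundary: assumes w: "ok1 FG w"
  shows "ok2 MH (phi_canon Gr he w) \<and> dom2 MH (phi_canon Gr he w) = phi1 he w \<and>
    cod2 MH (phi_canon Gr he w) = nword (hv (src1 FG w)) (lift_arcs he (flatF w)) \<and> M.iso (phi_canon Gr he w)"
proof -
  have r: "ok1 FG (nword (src1 FG w) (flatF w))" using F.canon_nword[OF w] .
  have i: "M.iso (X (PhiMap (canonF Gr w)))" using Phi_iso F.canon_iso[OF w] by blast
  have j: "M.iso (phi_cmp_inv he (src1 FG w) (flatF w))" using phi_cmp_inverses[OF r] M.inverses_iso by blast
  show ?thesis unfolding phi_canon_def using w r i j by (auto intro!: M.iso_V)
qed

text \<open>For an edge \<open>e\<close> of \<open>G\<close> the generator \<open>\<Phi>(e)\<close> is the edge \<open>H(e)\<close> of \<open>M\<close>, so its two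
  normalisations must agree; this is where the right unit axiom of \<open>\<Phi>\<close> enters.\<close>

lemma phi_canon_arc: assumes e: "e \<in> arcs Gr" shows "phi_canon Gr he (G e) \<cong> Ri (G (Inl (he e)))"
proof -
  let ?s = "gsrc Gr e" and ?E = "G (Inl (he e)) :: ('c, 'd + ('a,'b) w1) w1"
  have s: "?s \<in> verts Gr" using wg e by (auto simp: wf_graph_def)
  have E: "ok1 MH ?E" "src1 MH ?E = hv ?s" using he_arc[OF e] by auto
  have i1: "M.inverses (X (PhiMap (R (G e)))) (X (PhiMap (Ri (G e))))"
    by (rule Phi_inverses[OF F.inverses_R]) (use e in simp)
  have i2: "M.inverses (X (PhiC (G e) (U ?s))) (X (PhiCi (G e) (U ?s)))"
    by (rule PhiC_inverses) (use e s in auto)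
  have i3: "M.inverses (H (Id ?E) (X (PhiU ?s))) (H (Id ?E) (X (PhiUi ?s)))"
    by (rule M.inverses_H[OF PhiU_inverses[OF s] M.inverses_Id]) (use E s in auto)
  have i23: "M.inverses (V (X (PhiC (G e) (U ?s))) (H (Id ?E) (X (PhiU ?s))))
     (V (H (Id ?E) (X (PhiUi ?s))) (X (PhiCi (G e) (U ?s))))"
    by (rule M.inverses_V[OF i3 i2]) (use E s in auto)
  have i: "M.inverses (V (X (PhiMap (R (G e)))) (V (X (PhiC (G e) (U ?s))) (H (Id ?E) (X (PhiU ?s)))))
     (V (V (H (Id ?E) (X (PhiUi ?s))) (X (PhiCi (G e) (U ?s)))) (X (PhiMap (Ri (G e)))))"
    by (rule M.inverses_V[OF i23 i1]) (use E s e in auto)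
  have k: "V (X (PhiMap (R (G e)))) (V (X (PhiC (G e) (U ?s))) (H (Id ?E) (X (PhiU ?s)))) \<cong> R ?E"
    using Phi_runit[of "G e"] e by simp
  have "V (V (H (Id ?E) (X (PhiUi ?s))) (X (PhiCi (G e) (U ?s)))) (X (PhiMap (Ri (G e)))) \<cong> Ri ?E"
    by (rule M.inverses_unique[OF i M.inverses_R k]) (use E in simp)
  thus ?thesis by (simp add: phi_canon_def)
qed

lemma canonM_phi1: assumes w: "ok1 FG w" shows "canonM (phi1 he w) \<cong> phi_canon Gr he w"
proof (cases "\<exists>e. w = G e")
  case True
  then obtain e where "w = G e" by blast
  then show ?thesis using phi_canon_arc[of e] w by (auto intro: M.eq_sym)
next
  case False
  then have "canonM (phi1 he w) = phi_canon Gr he w" by (cases w) auto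
  then show ?thesis using phi_canon_boundary[OF w] M.eq_refl by simp
qed

lemma flatM_phi1: "ok1 FG w \<Longrightarrow> flatM (phi1 he w) = lift_arcs he (flatF w)"
  by (cases w) auto

lemma Phi_lunit_natural:
  assumes Q: "ok1 FG Q" and v: "v = tgt1 FG Q" and c: "ok2 MH c" "cod2 MH c = phi1 he Q"
  shows "V (X (PhiMap (L Q))) (V (X (PhiC (U v) Q)) (H (X (PhiU v)) c)) \<cong> V c (L (dom2 MH c))"
proof -
  have [simp]: "ok1 MH (dom2 MH c)" "tgt1 MH (dom2 MH c) = hv v"
    using M.boundary[OF c(1)] c(2) Q v by auto
  note [simp] = Q c F_endpoints[OF Q] hv_vertex
  have "V (X (PhiMap (L Q))) (V (X (PhiC (U v) Q)) (H (X (PhiU v)) c))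
     \<cong> V (X (PhiMap (L Q))) (V (X (PhiC (U v) Q)) (H (V (X (PhiU v)) (Id (U (hv v)))) (V (Id (phi1 he Q)) c)))"
    by (rule M.V_cong_right[OF M.V_cong_right[OF M.H_cong[OF M.eq_sym[OF M.V_Id_right] M.eq_sym[OF M.V_Id_left]]]]) (auto simp: v)
  also have "\<dots> \<cong> V (X (PhiMap (L Q))) (V (X (PhiC (U v) Q)) (V (H (X (PhiU v)) (Id (phi1 he Q))) (H (Id (U (hv v))) c)))"
    by (rule M.V_cong_right[OF M.V_cong_right[OF M.interchange]]) (auto simp: v)
  also have "\<dots> \<cong> V (X (PhiMap (L Q))) (V (V (X (PhiC (U v) Q)) (H (X (PhiU v)) (Id (phi1 he Q)))) (H (Id (U (hv v))) c))"
    by (rule M.V_cong_right[OF M.eq_sym[OF M.V_assoc]]) (auto simp: v)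
  also have "\<dots> \<cong> V (V (X (PhiMap (L Q))) (V (X (PhiC (U v) Q)) (H (X (PhiU v)) (Id (phi1 he Q))))) (H (Id (U (hv v))) c)"
    by (rule M.eq_sym[OF M.V_assoc]) (auto simp: v)
  also have "\<dots> \<cong> V (L (phi1 he Q)) (H (Id (U (hv v))) c)"
    by (rule M.V_cong_left) (use Phi_lunit[OF Q] in \<open>auto simp: v\<close>)
  also have "\<dots> \<cong> V c (L (dom2 MH c))"
    by (rule M.L_natural) (auto simp: v)
  finally show ?thesis .
qed

lemma Phi_assoc_natural:
  assumes g: "ok1 FG g" and P: "ok1 FG P" and Q: "ok1 FG Q"
    and gP: "src1 FG g = tgt1 FG P" and PQ: "src1 FG P = tgt1 FG Q"
    and p: "ok2 MH p" "cod2 MH p = phi1 he P" and q: "ok2 MH q" "cod2 MH q = phi1 he Q"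
  shows "V (X (PhiMap (A g P Q))) (V (X (PhiC (C g P) Q)) (H (V (X (PhiC g P)) (H (Id (phi1 he g)) p)) q))
    \<cong> V (X (PhiC g (C P Q))) (V (H (Id (phi1 he g)) (X (PhiC P Q)))
        (V (H (Id (phi1 he g)) (H p q)) (A (phi1 he g) (dom2 MH p) (dom2 MH q))))"
proof -
  have [simp]: "ok1 MH (dom2 MH p)" "src1 MH (dom2 MH p) = hv (src1 FG P)" "tgt1 MH (dom2 MH p) = hv (tgt1 FG P)"
    using M.boundary[OF p(1)] p(2) P by auto
  have [simp]: "ok1 MH (dom2 MH q)" "src1 MH (dom2 MH q) = hv (src1 FG Q)" "tgt1 MH (dom2 MH q) = hv (tgt1 FG Q)"
    using M.boundary[OF q(1)] q(2) Q by auto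
  note [simp] = g P Q gP PQ p q
  let ?g = "phi1 he g" and ?A' = "A (phi1 he g) (dom2 MH p) (dom2 MH q)"
  have "V (X (PhiMap (A g P Q))) (V (X (PhiC (C g P) Q)) (H (V (X (PhiC g P)) (H (Id ?g) p)) q))
    \<cong> V (X (PhiMap (A g P Q))) (V (X (PhiC (C g P) Q)) (H (V (X (PhiC g P)) (H (Id ?g) p)) (V (Id (phi1 he Q)) q)))"
    by (rule M.V_cong_right[OF M.V_cong_right[OF M.H_cong_right[OF M.eq_sym[OF M.V_Id_left]]]]) auto
  also have "\<dots> \<cong> V (X (PhiMap (A g P Q))) (V (X (PhiC (C g P) Q)) (V (H (X (PhiC g P)) (Id (phi1 he Q))) (H (H (Id ?g) p) q)))"
    by (rule M.V_cong_right[OF M.V_cong_right[OF M.interchange]]) auto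
  also have "\<dots> \<cong> V (X (PhiMap (A g P Q))) (V (V (X (PhiC (C g P) Q)) (H (X (PhiC g P)) (Id (phi1 he Q)))) (H (H (Id ?g) p) q))"
    by (rule M.V_cong_right[OF M.eq_sym[OF M.V_assoc]]) auto
  also have "\<dots> \<cong> V (V (X (PhiMap (A g P Q))) (V (X (PhiC (C g P) Q)) (H (X (PhiC g P)) (Id (phi1 he Q))))) (H (H (Id ?g) p) q)"
    by (rule M.eq_sym[OF M.V_assoc]) auto
  also have "\<dots> \<cong> V (V (X (PhiC g (C P Q))) (V (H (Id ?g) (X (PhiC P Q))) (A ?g (phi1 he P) (phi1 he Q)))) (H (H (Id ?g) p) q)"
    by (rule M.V_cong_left) (use Phi_assoc[of g P Q] in auto)
  also have "\<dots> \<cong> V (X (PhiC g (C P Q))) (V (V (H (Id ?g) (X (PhiC P Q))) (A ?g (phi1 he P) (phi1 he Q))) (H (H (Id ?g) p) q))"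
    by (rule M.V_assoc) auto
  also have "\<dots> \<cong> V (X (PhiC g (C P Q))) (V (H (Id ?g) (X (PhiC P Q))) (V (A ?g (phi1 he P) (phi1 he Q)) (H (H (Id ?g) p) q)))"
    by (rule M.V_cong_right[OF M.V_assoc]) auto
  also have "\<dots> \<cong> V (X (PhiC g (C P Q))) (V (H (Id ?g) (X (PhiC P Q))) (V (H (Id ?g) (H p q)) ?A'))"
    by (rule M.V_cong_right[OF M.V_cong_right[OF M.A_natural]]) auto
  finally show ?thesis .
qed

lemma phi_cmp_nu: assumes "ok1 FG (nword s1 l1)" "ok1 FG (nword s2 l2)" "s1 = tgt1 FG (nword s2 l2)"
  shows "V (X (PhiMap (join s1 s2 l1 l2))) (V (X (PhiC (nword s1 l1) (nword s2 l2))) (H (phi_cmp he s1 l1) (phi_cmp he s2 l2)))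
    \<cong> V (phi_cmp he s2 (l1@l2)) (join (hv s1) (hv s2) (lift_arcs he l1) (lift_arcs he l2))"
  using assms
proof (induction l1)
  case Nil
  then show ?case using Phi_lunit_natural[of "nword s2 l2" s1 "phi_cmp he s2 l2"] by simp
next
  case (Cons e xs)
  have h: "ok1 FG (nword s1 xs)" "e \<in> arcs Gr" "gsrc Gr e = tgt1 FG (nword s1 xs)" using Cons.prems by auto
  note ih = Cons.IH[OF h(1) Cons.prems(2,3)]
  have r12: "ok1 FG (nword s2 (xs@l2))" "tgt1 FG (nword s2 (xs@l2)) = tgt1 FG (nword s1 xs)"
    using F.nword_append[OF h(1) Cons.prems(2,3)] by auto
  have v: "s1 \<in> verts Gr" "s2 \<in> verts Gr" using Cons.prems F.nword_src_vertex by auto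
  have ge: "he e \<in> arcs Mg" "gsrc Mg (he e) = hv (gsrc Gr e)" "gtgt Mg (he e) = hv (gtgt Gr e)" using he_arc[OF h(2)] by auto
  have rm: "ok1 MH (nword (hv s2) (lift_arcs he xs @ lift_arcs he l2))" "tgt1 MH (nword (hv s2) (lift_arcs he xs @ lift_arcs he l2)) = hv (tgt1 FG (nword s1 xs))"
    using nword_lift[OF r12(1)] r12(2) by auto
  note [simp] = h r12 v ge rm Cons.prems(2) Cons.prems(3)[symmetric]
  let ?Ge = "G e :: ('a,'b) w1" and ?E = "G (Inl (he e)) :: ('c, 'd + ('a,'b) w1) w1"
  let ?P = "nword s1 xs" and ?Q = "nword s2 l2" and ?R' = "nword s2 (xs@l2)"
  let ?cP = "phi_cmp he s1 xs" and ?c2 = "phi_cmp he s2 l2" and ?c' = "phi_cmp he s2 (xs@l2)"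
  let ?N = "join s1 s2 xs l2" and ?nM = "join (hv s1) (hv s2) (lift_arcs he xs) (lift_arcs he l2)"
  let ?A' = "A ?E (nword (hv s1) (lift_arcs he xs)) (nword (hv s2) (lift_arcs he l2))"
  have "V (X (PhiMap (V (H (Id ?Ge) ?N) (A ?Ge ?P ?Q)))) (V (X (PhiC (C ?Ge ?P) ?Q)) (H (V (X (PhiC ?Ge ?P)) (H (Id ?E) ?cP)) ?c2))
     \<cong> V (V (X (PhiMap (H (Id ?Ge) ?N))) (X (PhiMap (A ?Ge ?P ?Q)))) (V (X (PhiC (C ?Ge ?P) ?Q)) (H (V (X (PhiC ?Ge ?P)) (H (Id ?E) ?cP)) ?c2))"
    by (rule M.V_cong_left[OF Phi_V]) auto
  also have "\<dots> \<cong> V (X (PhiMap (H (Id ?Ge) ?N))) (V (X (PhiMap (A ?Ge ?P ?Q))) (V (X (PhiC (C ?Ge ?P) ?Q)) (H (V (X (PhiC ?Ge ?P)) (H (Id ?E) ?cP)) ?c2)))"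
    by (rule M.V_assoc) auto
  also have "\<dots> \<cong> V (X (PhiMap (H (Id ?Ge) ?N))) (V (X (PhiC ?Ge (C ?P ?Q))) (V (H (Id ?E) (X (PhiC ?P ?Q))) (V (H (Id ?E) (H ?cP ?c2)) ?A')))"
    by (rule M.V_cong_right) (use Phi_assoc_natural[of ?Ge ?P ?Q ?cP ?c2] in auto)
  also have "\<dots> \<cong> V (V (X (PhiMap (H (Id ?Ge) ?N))) (X (PhiC ?Ge (C ?P ?Q)))) (V (H (Id ?E) (X (PhiC ?P ?Q))) (V (H (Id ?E) (H ?cP ?c2)) ?A'))"
    by (rule M.eq_sym[OF M.V_assoc]) auto
  also have "\<dots> \<cong> V (V (X (PhiC ?Ge ?R')) (H (X (PhiMap (Id ?Ge))) (X (PhiMap ?N)))) (V (H (Id ?E) (X (PhiC ?P ?Q))) (V (H (Id ?E) (H ?cP ?c2)) ?A'))"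
    by (rule M.V_cong_left) (use PhiC_natural[of "Id ?Ge" ?N] in \<open>auto intro: M.eq_sym\<close>)
  also have "\<dots> \<cong> V (V (X (PhiC ?Ge ?R')) (H (Id ?E) (X (PhiMap ?N)))) (V (H (Id ?E) (X (PhiC ?P ?Q))) (V (H (Id ?E) (H ?cP ?c2)) ?A'))"
    by (rule M.V_cong_left[OF M.V_cong_right[OF M.H_cong_left]]) (use Phi_Id[of ?Ge] in auto)
  also have "\<dots> \<cong> V (X (PhiC ?Ge ?R')) (V (H (Id ?E) (X (PhiMap ?N))) (V (H (Id ?E) (X (PhiC ?P ?Q))) (V (H (Id ?E) (H ?cP ?c2)) ?A')))"
    by (rule M.V_assoc) auto
  also have "\<dots> \<cong> V (X (PhiC ?Ge ?R')) (V (H (Id ?E) (X (PhiMap ?N))) (V (V (H (Id ?E) (X (PhiC ?P ?Q))) (H (Id ?E) (H ?cP ?c2))) ?A'))"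
    by (rule M.V_cong_right[OF M.V_cong_right[OF M.eq_sym[OF M.V_assoc]]]) auto
  also have "\<dots> \<cong> V (X (PhiC ?Ge ?R')) (V (H (Id ?E) (X (PhiMap ?N))) (V (H (Id ?E) (V (X (PhiC ?P ?Q)) (H ?cP ?c2))) ?A'))"
    by (rule M.V_cong_right[OF M.V_cong_right[OF M.V_cong_left[OF M.eq_sym[OF M.H_Id_V]]]]) auto
  also have "\<dots> \<cong> V (X (PhiC ?Ge ?R')) (V (V (H (Id ?E) (X (PhiMap ?N))) (H (Id ?E) (V (X (PhiC ?P ?Q)) (H ?cP ?c2)))) ?A')"
    by (rule M.V_cong_right[OF M.eq_sym[OF M.V_assoc]]) auto
  also have "\<dots> \<cong> V (X (PhiC ?Ge ?R')) (V (H (Id ?E) (V (X (PhiMap ?N)) (V (X (PhiC ?P ?Q)) (H ?cP ?c2)))) ?A')"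
    by (rule M.V_cong_right[OF M.V_cong_left[OF M.eq_sym[OF M.H_Id_V]]]) auto
  also have "\<dots> \<cong> V (X (PhiC ?Ge ?R')) (V (H (Id ?E) (V ?c' ?nM)) ?A')"
    by (rule M.V_cong_right[OF M.V_cong_left[OF M.H_cong_right[OF ih]]]) auto
  also have "\<dots> \<cong> V (X (PhiC ?Ge ?R')) (V (V (H (Id ?E) ?c') (H (Id ?E) ?nM)) ?A')"
    by (rule M.V_cong_right[OF M.V_cong_left[OF M.H_Id_V]]) auto
  also have "\<dots> \<cong> V (X (PhiC ?Ge ?R')) (V (H (Id ?E) ?c') (V (H (Id ?E) ?nM) ?A'))"
    by (rule M.V_cong_right[OF M.V_assoc]) auto
  also have "\<dots> \<cong> V (V (X (PhiC ?Ge ?R')) (H (Id ?E) ?c')) (V (H (Id ?E) ?nM) ?A')"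
    by (rule M.eq_sym[OF M.V_assoc]) auto
  finally show ?case by simp
qed

lemma phi_cmp_inv_nu: assumes a: "ok1 FG (nword s1 l1)" "ok1 FG (nword s2 l2)" "s1 = tgt1 FG (nword s2 l2)"
  shows "V (phi_cmp_inv he s2 (l1@l2)) (V (X (PhiMap (join s1 s2 l1 l2))) (X (PhiC (nword s1 l1) (nword s2 l2))))
    \<cong> V (join (hv s1) (hv s2) (lift_arcs he l1) (lift_arcs he l2)) (H (phi_cmp_inv he s1 l1) (phi_cmp_inv he s2 l2))"
proof -
  have r: "ok1 FG (nword s2 (l1@l2))" using F.nword_append[OF a] by auto
  have s: "s1 \<in> verts Gr" "s2 \<in> verts Gr" using a F.nword_src_vertex by auto
  have rt: "tgt1 FG (nword s2 (l1@l2)) = tgt1 FG (nword s1 l1)" using F.nword_append[OF a] by auto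
  have rm: "ok1 MH (nword (hv s2) (lift_arcs he l1 @ lift_arcs he l2))" "tgt1 MH (nword (hv s2) (lift_arcs he l1 @ lift_arcs he l2)) = hv (tgt1 FG (nword s1 l1))"
    using nword_lift[OF r] rt by auto
  note [simp] = a(1,2) a(3)[symmetric] r s rm
  have k: "V (X (PhiMap (join s1 s2 l1 l2))) (V (X (PhiC (nword s1 l1) (nword s2 l2))) (H (phi_cmp he s1 l1) (phi_cmp he s2 l2)))
    \<cong> V (phi_cmp he s2 (l1@l2)) (join (hv s1) (hv s2) (lift_arcs he l1) (lift_arcs he l2))" by (rule phi_cmp_nu[OF a])
  have k2: "V (V (X (PhiMap (join s1 s2 l1 l2))) (X (PhiC (nword s1 l1) (nword s2 l2)))) (H (phi_cmp he s1 l1) (phi_cmp he s2 l2))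
    \<cong> V (phi_cmp he s2 (l1@l2)) (join (hv s1) (hv s2) (lift_arcs he l1) (lift_arcs he l2))"
    using M.V_assoc[of "X (PhiMap (join s1 s2 l1 l2))" "X (PhiC (nword s1 l1) (nword s2 l2))" "H (phi_cmp he s1 l1) (phi_cmp he s2 l2)"] k
    by (auto intro: beq.trans)
  have i: "M.inverses (H (phi_cmp he s1 l1) (phi_cmp he s2 l2)) (H (phi_cmp_inv he s1 l1) (phi_cmp_inv he s2 l2))"
    by (rule M.inverses_H[OF phi_cmp_inverses phi_cmp_inverses]) auto
  show ?thesis using M.inverses_swap[OF phi_cmp_inverses[of s2 "l1@l2"] i k2] by simp
qed

lemma canonM_natural_PhiMap: assumes a: "ok2 FG a"
  shows "V (canonM (phi1 he (cod2 FG a))) (X (PhiMap a)) \<cong> canonM (phi1 he (dom2 FG a))"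
proof -
  let ?c = "cod2 FG a" and ?d = "dom2 FG a"
  have t: "ok1 FG ?d" "ok1 FG ?c" using F.boundary[OF a] by auto
  have e1: "src1 FG ?d = src1 FG ?c" using F.boundary[OF a] by auto
  have e2: "flatF ?d = flatF ?c" and c: "V (canonF Gr ?c) a \<sim> canonF Gr ?d" using F.canon_natural[OF a] by auto
  have pc: "ok2 MH (phi_canon Gr he ?c)" "dom2 MH (phi_canon Gr he ?c) = phi1 he ?c" using phi_canon_boundary[OF t(2)] by auto
  have r: "ok1 FG (nword (src1 FG ?c) (flatF ?c))" using F.canon_nword[OF t(2)] .
  have cc: "ok2 FG (canonF Gr ?c)" "dom2 FG (canonF Gr ?c) = ?c" "cod2 FG (canonF Gr ?c) = nword (src1 FG ?c) (flatF ?c)"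
    using F.canon_boundary[OF t(2)] by auto
  have "V (canonM (phi1 he ?c)) (X (PhiMap a)) \<cong> V (phi_canon Gr he ?c) (X (PhiMap a))"
    by (rule M.V_cong_left[OF canonM_phi1[OF t(2)]]) (use a pc M.beqD(3)[OF canonM_phi1[OF t(2)]] in simp_all)
  also have "\<dots> = V (V (phi_cmp_inv he (src1 FG ?c) (flatF ?c)) (X (PhiMap (canonF Gr ?c)))) (X (PhiMap a))" by (simp add: phi_canon_def)
  also have "\<dots> \<cong> V (phi_cmp_inv he (src1 FG ?c) (flatF ?c)) (V (X (PhiMap (canonF Gr ?c))) (X (PhiMap a)))"
    by (rule M.V_assoc) (use a r cc in simp)
  also have "\<dots> \<cong> V (phi_cmp_inv he (src1 FG ?c) (flatF ?c)) (X (PhiMap (V (canonF Gr ?c) a)))"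
    by (rule M.V_cong_right[OF M.eq_sym[OF Phi_V]]) (use a r cc in simp_all)
  also have "\<dots> \<cong> V (phi_cmp_inv he (src1 FG ?c) (flatF ?c)) (X (PhiMap (canonF Gr ?d)))"
    by (rule M.V_cong_right[OF Phi_cong[OF c]]) (use a r cc in simp_all)
  also have "\<dots> = phi_canon Gr he ?d" by (simp only: phi_canon_def e1 e2)
  also have "\<dots> \<cong> canonM (phi1 he ?d)" by (rule M.eq_sym[OF canonM_phi1[OF t(1)]])
  finally show ?thesis .
qed

lemma canonM_natural_PhiC: assumes g: "ok1 FG g" and f: "ok1 FG f" and gf: "src1 FG g = tgt1 FG f"
  shows "V (canonM (phi1 he (C g f))) (X (PhiC g f)) \<cong> canonM (C (phi1 he g) (phi1 he f))"
proof -
  have rg: "ok1 FG (nword (src1 FG g) (flatF g))" "tgt1 FG (nword (src1 FG g) (flatF g)) = tgt1 FG g"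
    using F.canon_nword[OF g] F.canon_nword_tgt[OF g] by auto
  have rf: "ok1 FG (nword (src1 FG f) (flatF f))" "tgt1 FG (nword (src1 FG f) (flatF f)) = tgt1 FG f"
    using F.canon_nword[OF f] F.canon_nword_tgt[OF f] by auto
  have ra: "ok1 FG (nword (src1 FG f) (flatF g @ flatF f))" "tgt1 FG (nword (src1 FG f) (flatF g @ flatF f)) = tgt1 FG g"
    using F.nword_append[OF rg(1) rf(1)] rg rf gf by auto
  have rm: "ok1 MH (nword (hv (src1 FG f)) (lift_arcs he (flatF g) @ lift_arcs he (flatF f)))"
     "tgt1 MH (nword (hv (src1 FG f)) (lift_arcs he (flatF g) @ lift_arcs he (flatF f))) = hv (tgt1 FG g)"
    using nword_lift[OF ra(1)] ra(2) by auto
  have sv: "src1 FG f \<in> verts Gr" "src1 FG g \<in> verts Gr" using g f F_endpoints by auto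
  have kp: "V (phi_cmp_inv he (src1 FG f) (flatF g @ flatF f)) (V (X (PhiMap (join (src1 FG g) (src1 FG f) (flatF g) (flatF f))))
       (X (PhiC (nword (src1 FG g) (flatF g)) (nword (src1 FG f) (flatF f)))))
    \<cong> V (join (hv (src1 FG g)) (hv (src1 FG f)) (lift_arcs he (flatF g)) (lift_arcs he (flatF f))) (H (phi_cmp_inv he (src1 FG g) (flatF g)) (phi_cmp_inv he (src1 FG f) (flatF f)))"
    by (rule phi_cmp_inv_nu[OF rg(1) rf(1)]) (use rf gf in simp)
  note [simp] = g f gf[symmetric] rg rf ra rm sv flatM_phi1
  let ?ps = "phi_cmp_inv he (src1 FG f) (flatF g @ flatF f)" and ?nF = "join (src1 FG g) (src1 FG f) (flatF g) (flatF f)"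
  let ?cg = "canonF Gr g" and ?cf = "canonF Gr f"
  let ?nM = "join (hv (src1 FG g)) (hv (src1 FG f)) (lift_arcs he (flatF g)) (lift_arcs he (flatF f))"
  let ?Cr = "X (PhiC (nword (src1 FG g) (flatF g)) (nword (src1 FG f) (flatF f)))"
  have "canonM (phi1 he (C g f)) = phi_canon Gr he (C g f)" by simp
  hence "V (canonM (phi1 he (C g f))) (X (PhiC g f)) = V (V ?ps (X (PhiMap (V ?nF (H ?cg ?cf))))) (X (PhiC g f))"
    by (simp add: phi_canon_def)
  also have "\<dots> \<cong> V ?ps (V (X (PhiMap (V ?nF (H ?cg ?cf)))) (X (PhiC g f)))"
    by (rule M.V_assoc) simp
  also have "\<dots> \<cong> V ?ps (V (V (X (PhiMap ?nF)) (X (PhiMap (H ?cg ?cf)))) (X (PhiC g f)))"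
    by (rule M.V_cong_right[OF M.V_cong_left[OF Phi_V]]) simp_all
  also have "\<dots> \<cong> V ?ps (V (X (PhiMap ?nF)) (V (X (PhiMap (H ?cg ?cf))) (X (PhiC g f))))"
    by (rule M.V_cong_right[OF M.V_assoc]) simp_all
  also have "\<dots> \<cong> V ?ps (V (X (PhiMap ?nF)) (V ?Cr (H (X (PhiMap ?cg)) (X (PhiMap ?cf)))))"
    by (rule M.V_cong_right[OF M.V_cong_right]) (use PhiC_natural[of ?cg ?cf] in \<open>auto intro: M.eq_sym\<close>)
  also have "\<dots> \<cong> V ?ps (V (V (X (PhiMap ?nF)) ?Cr) (H (X (PhiMap ?cg)) (X (PhiMap ?cf))))"
    by (rule M.V_cong_right[OF M.eq_sym[OF M.V_assoc]]) simp_all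
  also have "\<dots> \<cong> V (V ?ps (V (X (PhiMap ?nF)) ?Cr)) (H (X (PhiMap ?cg)) (X (PhiMap ?cf)))"
    by (rule M.eq_sym[OF M.V_assoc]) simp_all
  also have "\<dots> \<cong> V (V ?nM (H (phi_cmp_inv he (src1 FG g) (flatF g)) (phi_cmp_inv he (src1 FG f) (flatF f)))) (H (X (PhiMap ?cg)) (X (PhiMap ?cf)))"
    by (rule M.V_cong_left[OF kp]) simp_all
  also have "\<dots> \<cong> V ?nM (V (H (phi_cmp_inv he (src1 FG g) (flatF g)) (phi_cmp_inv he (src1 FG f) (flatF f))) (H (X (PhiMap ?cg)) (X (PhiMap ?cf))))"
    by (rule M.V_assoc) simp_all
  also have "\<dots> \<cong> V ?nM (H (phi_canon Gr he g) (phi_canon Gr he f))"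
    unfolding phi_canon_def by (rule M.V_cong_right[OF M.eq_sym[OF M.interchange]]) simp_all
  also have "\<dots> \<cong> V ?nM (H (canonM (phi1 he g)) (canonM (phi1 he f)))"
    by (rule M.V_cong_right[OF M.H_cong[OF M.eq_sym[OF canonM_phi1] M.eq_sym[OF canonM_phi1]]]) (simp_all add: phi_canon_boundary)
  also have "\<dots> = canonM (C (phi1 he g) (phi1 he f))" by simp
  finally show ?thesis .
qed

lemma canonM_natural_PhiU: assumes v: "v \<in> verts Gr"
  shows "V (canonM (phi1 he (U v))) (X (PhiU v)) \<cong> canonM (U (hv v))"
proof -
  have [simp]: "hv v \<in> verts Mg" using hv_vertex[OF v] .
  have "V (canonM (phi1 he (U v))) (X (PhiU v)) = V (V (X (PhiUi v)) (X (PhiMap (Id (U v))))) (X (PhiU v))"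
    by (simp add: phi_canon_def)
  also have "\<dots> \<cong> V (V (X (PhiUi v)) (Id (G (Inr (U v))))) (X (PhiU v))"
    by (rule M.V_cong_left[OF M.V_cong_right]) (use Phi_Id[of "U v"] v in simp_all)
  also have "\<dots> \<cong> V (X (PhiUi v)) (X (PhiU v))"
    by (rule M.V_cong_left[OF M.V_Id_right]) (use v in simp_all)
  also have "\<dots> \<cong> Id (U (hv v))" using PhiU_inverses[OF v] by (simp add: M.inverses_def)
  finally show ?thesis by simp
qed

lemma canonM_natural_gen: assumes x: "x \<in> sx MH" shows "V (canonM (sxc MH x)) (X x) \<cong> canonM (sxd MH x)"
proof (cases x)
  case (PhiMap a)
  then show ?thesis using canonM_natural_PhiMap x by simp
next
  case (PhiC g f)
  then show ?thesis using canonM_natural_PhiC x by simp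
next
  case (PhiCi g f)
  then have h: "ok1 FG g" "ok1 FG f" "src1 FG g = tgt1 FG f" using x by auto
  have "V (canonM (C (phi1 he g) (phi1 he f))) (X (PhiCi g f)) \<cong> canonM (phi1 he (C g f))"
    by (rule M.inverses_move[OF PhiC_inverses[OF h] canonM_natural_PhiC[OF h]])
  then show ?thesis using PhiCi by simp
next
  case (PhiU v)
  then show ?thesis using canonM_natural_PhiU x by simp
next
  case (PhiUi v)
  then have h: "v \<in> verts Gr" using x by auto
  have "V (canonM (U (hv v))) (X (PhiUi v)) \<cong> canonM (phi1 he (U v))"
    by (rule M.inverses_move[OF PhiU_inverses[OF h] canonM_natural_PhiU[OF h]])
  then show ?thesis using PhiUi by simp
qed

lemma flatM_gen: assumes x: "x \<in> sx MH" shows "flatM (sxd MH x) = flatM (sxc MH x)"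
proof (cases x)
  case (PhiMap a)
  then have a: "ok2 FG a" using x by auto
  have t: "ok1 FG (dom2 FG a)" "ok1 FG (cod2 FG a)" using F.boundary[OF a] by auto
  have e: "flatF (dom2 FG a) = flatF (cod2 FG a)" using F.canon_natural[OF a] by auto
  show ?thesis using PhiMap by (simp add: flatM_phi1[OF t(1)] flatM_phi1[OF t(2)] e)
qed (use x in \<open>auto simp: flatM_phi1\<close>)

lemma gen_canonM_boundary: assumes g: "g \<in> sg MH"
  shows "ok2 MH (gen_canonM Gr he g) \<and> dom2 MH (gen_canonM Gr he g) = G g \<and>
     cod2 MH (gen_canonM Gr he g) = nword (sgs MH g) (gen_flatM he g) \<and> M.iso (gen_canonM Gr he g)"
proof (cases g)
  case (Inl m)
  then show ?thesis using g wm M.inverses_R[of "G (Inl m)"] M.inverses_iso(2) by (auto simp: wf_graph_def)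
next
  case (Inr w)
  then have w: "ok1 FG w" "\<forall>e. w \<noteq> G e" using g by auto
  have "phi1 he w = G (Inr w)" using w by (cases w) auto
  then show ?thesis using Inr phi_canon_boundary[OF w(1)] by simp
qed

sublocale M: normalization MH Rm "gen_flatM he" "gen_canonM Gr he"
  by unfold_locales (auto dest: gen_canonM_boundary intro: flatM_gen[simplified] canonM_natural_gen[simplified])

end

theorem mainTheorem11:
  fixes Gr :: "('a,'b) graph" and Mg :: "('c,'d) graph"
    and hv :: "'a \<Rightarrow> 'c" and he :: "'b \<Rightarrow> 'd"
  assumes "wf_graph Gr" and "wf_graph Mg" and "graph_hom Gr Mg hv he"
  shows "hom_thin (MS Gr Mg hv he) (mrel Gr hv he)"
proof -
  interpret graph_map Gr Mg hv he using assms by unfold_locales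
  show ?thesis by (rule M.hom_thin_if_normalizable)
qed

end
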